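(* Let $n$ be odd and let $S=\{s_1<\dots<s_k\}\subseteq[n]$ be nonempty. Then \[ \sum_{i=\lfloor n/2\rfloor+1}^{n-1}(-1)^i\binom{n}{i}f_S(\check\Phi^n_i)=\binom{n}{s_k}\binom{s_k}{s_1,\,s_2-s_1,\,\dots,\,s_k-s_{k-1}}\sum_{\lfloor n/2\rfloor+1\le j\le s_k}(-1)^j\binom{s_k}{j}+\delta_{S,\{n\}}, \] where $\delta_{S,\{n\}}=1$ if $S=\{n\}$ and $0$ otherwise.
   Context: The polynomials $\check\Phi^n_i$ (in non-commuting $c,d$, homogeneous of degree $n$ with $\deg c=1,\deg d=2$): let $\Lambda^n$ be the boundary complex of an $n$-simplex with facets $\sigma_0,\dots,\sigma_n$; for $0\le i\le n-1$ let $\Gamma^n_i$ be the simplicial complex generated by $\sigma_0,\dots,\sigma_i$, and $\Lambda^n_i$ the regular CW complex obtained from $\Gamma^n_i$ by attaching one new $(n-1)$-cell $\tau$ with $\partial\tau=\partial\Gamma^n_i$. $\Phi_{\Lambda}$ denotes the $cd$-index of the face poset of $\Lambda$ with $\hat0$ and $\hat1$ adjoined (an Eulerian poset $Q$ of rank $n+1$), i.e. the polynomial with $\Phi_Q(a+b,ab+ba)=\sum_{S\subseteq[n]}h_S(Q)u_S$, where $h_S(Q)=\sum_{T\subseteq S}(-1)^{|S\setminus T|}f_T(Q)$, $f_T(Q)$ counts chains $\hat0<x_1<\dots<\hat1$ with rank set $T$, and $u_S=u_1\cdots u_n$ with $u_i=b$ for $i\in S$, $u_i=a$ otherwise. Set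 $\check\Phi^n_0=\Phi_{\Lambda^n_0}$ and $\check\Phi^n_i=\Phi_{\Lambda^n_i}-\Phi_{\Lambda^n_{i-1}}$ for $1\le i\le n-1$. The flag $f$-vector associated to a degree-$n$ $cd$-polynomial $\Phi$ is the vector $(f_S(\Phi))_{S\subseteq[n]}$ defined by $\sum_{S\subseteq[n]}f_S(\Phi)u_S=\Psi(a+b,b)$ where $\Psi(a,b)=\Phi(a+b,ab+ba)$; this is linear in $\Phi$ and $f_S(\Phi_Q)=f_S(Q)$ for Eulerian $Q$. *)

theory Defs
  imports Main
begin

text \<open>cd-words: letters c (degree 1) and d (degree 2).  A cd-polynomial is a
  function from cd-words to integer coefficients.  ab-words are bool lists,
  True = b, False = a.\<close>

datatype cdl = C | D

fun cdeg :: "cdl list \<Rightarrow> nat" where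
  "cdeg [] = 0"
| "cdeg (C # w) = Suc (cdeg w)"
| "cdeg (D # w) = Suc (Suc (cdeg w))"

type_synonym cdpoly = "cdl list \<Rightarrow> int"

text \<open>Number of ways the cd-word w turns into the ab-word u under
  c \<mapsto> a+b, d \<mapsto> ab+ba.\<close>
fun expcount :: "cdl list \<Rightarrow> bool list \<Rightarrow> nat" where
  "expcount [] [] = 1"
| "expcount (C # w) (x # u) = expcount w u"
| "expcount (D # w) (x # y # u) = (if x \<noteq> y then expcount w u else 0)"
| "expcount _ _ = 0"

definition cdwords :: "nat \<Rightarrow> cdl list set" where
  "cdwords m = {w. length w \<le> m \<and> cdeg w = m}"

text \<open>Coefficient of the ab-word u in \<Phi>(a+b, ab+ba).\<close>
definition abcoef :: "cdpoly \<Rightarrow> bool list \<Rightarrow> int" where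
  "abcoef \<Phi> u = (\<Sum>w\<in>cdwords (length u). \<Phi> w * int (expcount w u))"

definition uword :: "nat \<Rightarrow> nat set \<Rightarrow> bool list" where
  "uword n S = map (\<lambda>i. Suc i \<in> S) [0..<n]"

text \<open>Flag f-vector of a degree-n cd-polynomial: coefficient of u_S in
  \<Psi>(a+b,b), \<Psi>(a,b) = \<Phi>(a+b,ab+ba).  Substituting a \<mapsto> a+b, b \<mapsto> b, the
  ab-word u_T contributes to u_S exactly when T \<subseteq> S.\<close>
definition fvec :: "nat \<Rightarrow> cdpoly \<Rightarrow> nat set \<Rightarrow> int" where
  "fvec n \<Phi> S = (\<Sum>T\<in>Pow S. abcoef \<Phi> (uword n T))"

definition facet :: "nat \<Rightarrow> nat \<Rightarrow> nat set" where
  "facet n j = {0..n} - {j}"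

text \<open>Nonempty faces of \<Gamma>^n_i (the complex generated by \<sigma>_0..\<sigma>_i).\<close>
definition Gfaces :: "nat \<Rightarrow> nat \<Rightarrow> nat set set" where
  "Gfaces n i = {F. F \<noteq> {} \<and> (\<exists>j\<le>i. F \<subseteq> facet n j)}"

text \<open>Nonempty faces of the boundary of the pure (n-1)-dimensional complex
  \<Gamma>^n_i: faces of ridges (faces with n-1 vertices) lying in exactly one
  facet of \<Gamma>^n_i.\<close>
definition Bfaces :: "nat \<Rightarrow> nat \<Rightarrow> nat set set" where
  "Bfaces n i = {F. F \<noteq> {} \<and> (\<exists>R. F \<subseteq> R \<and> R \<subseteq> {0..n} \<and> card R = n - 1 \<and>
                        card {j. j \<le> i \<and> R \<subseteq> facet n j} = 1)}"

text \<open>Cells of \<Lambda>^n_i: Some F for a face F of \<Gamma>^n_i, None for the new cell \<tau>.\<close>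
definition cells :: "nat \<Rightarrow> nat \<Rightarrow> nat set option set" where
  "cells n i = Some ` Gfaces n i \<union> {None}"

text \<open>Rank in the face poset with \<hat>0 adjoined (rank of a cell = dim + 1).\<close>
fun crank :: "nat \<Rightarrow> nat set option \<Rightarrow> nat" where
  "crank n (Some F) = card F"
| "crank n None = n"

fun cless :: "nat \<Rightarrow> nat \<Rightarrow> nat set option \<Rightarrow> nat set option \<Rightarrow> bool" where
  "cless n i (Some F) (Some G) = (F \<subset> G)"
| "cless n i (Some F) None = (F \<in> Bfaces n i)"
| "cless n i None _ = False"

text \<open>f_T of the face poset of \<Lambda>^n_i with \<hat>0, \<hat>1 adjoined: number of chains
  \<hat>0 < x_1 < ... < \<hat>1 whose rank set is T (T \<subseteq> [n]).\<close>
definition flagf :: "nat \<Rightarrow> nat \<Rightarrow> nat set \<Rightarrow> nat" where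
  "flagf n i T = card {xs. set xs \<subseteq> cells n i \<and> sorted_wrt (cless n i) xs \<and>
                          map (crank n) xs = sorted_list_of_set T}"

definition flagh :: "nat \<Rightarrow> nat \<Rightarrow> nat set \<Rightarrow> int" where
  "flagh n i S = (\<Sum>T\<in>Pow S. (-1) ^ card (S - T) * int (flagf n i T))"

text \<open>cd-index \<Phi>_{\<Lambda>^n_i}: the degree-n cd-polynomial with
  \<Phi>(a+b,ab+ba) = \<Sum>_S h_S u_S.\<close>
definition cdindex :: "nat \<Rightarrow> nat \<Rightarrow> cdpoly" where
  "cdindex n i = (THE \<Phi>. (\<forall>w. cdeg w \<noteq> n \<longrightarrow> \<Phi> w = 0) \<and>
       (\<forall>S. S \<subseteq> {1..n} \<longrightarrow> abcoef \<Phi> (uword n S) = flagh n i S))"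

definition checkPhi :: "nat \<Rightarrow> nat \<Rightarrow> cdpoly" where
  "checkPhi n i = (if i = 0 then cdindex n 0
                   else (\<lambda>w. cdindex n i w - cdindex n (i - 1) w))"

fun gaps_from :: "nat \<Rightarrow> nat list \<Rightarrow> nat list" where
  "gaps_from p [] = []"
| "gaps_from p (x # xs) = (x - p) # gaps_from x xs"

definition multinom :: "nat set \<Rightarrow> nat" where
  "multinom S = fact (Max S) div prod_list (map fact (gaps_from 0 (sorted_list_of_set S)))"

end

theory Submission
  imports Defs
begin

text \<open>
  For \<open>i < n\<close> every cell of \<open>\<Lambda>\<^sup>n\<^sub>i\<close> except \<open>\<tau>\<close> is a simplex, so a chain with rank set \<open>S\<close>
  is counted by a multinomial coefficient times the number \<open>g m\<close> of faces of rank \<open>m = max S\<close>,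
  or, when \<open>n \<in> S\<close>, times the number \<open>k m\<close> of incidences between top cells and faces of rank
  \<open>m = max (S - {n})\<close>.
  Any such flag vector whose \<open>g\<close> and \<open>k\<close> satisfy relations of Dehn--Sommerville type is the flag
  vector of an explicit cd-polynomial, obtained by peeling off last letters, and the cd-index is
  determined by its flag vector. Hence the flag vector of \<open>checkPhi n i\<close> is explicit,
  and multiplying by \<open>n choose i\<close> turns its binomial terms into \<open>(n choose m) (m choose i)\<close> and
  \<open>(n choose m) (m choose (n - i))\<close>. Summed with signs over \<open>n div 2 < i < n\<close>, the reflection
  \<open>i \<mapsto> n - i\<close> (which flips the sign as \<open>n\<close> is odd) combines the two into the alternating
  sum of \<open>m choose i\<close> over \<open>0 < i < n\<close>, which is \<open>-1\<close> unless \<open>m = 0\<close>.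
\<close>

section \<open>Binomial identities\<close>

lemma choose_Suc_self: "Suc k choose k = Suc k"
  by (simp add: binomial_Suc_n)

text \<open>\<open>choose_shift A B m\<close> counts the \<open>m\<close>-subsets of an \<open>(A + B)\<close>-set containing a fixed \<open>B\<close>-subset
  (\<open>card_supersets\<close>).\<close>
definition choose_shift :: "nat \<Rightarrow> nat \<Rightarrow> nat \<Rightarrow> int" where
  "choose_shift A B j = (if B \<le> j then int (A choose (j - B)) else 0)"

lemma choose_shift_Suc_diff: "choose_shift (Suc a) b m - choose_shift a (Suc b) m = choose_shift a b m"
proof (cases "b < m")
  case True
  then have "m - b = Suc (m - Suc b)" by simp
  then show ?thesis using True by (simp add: choose_shift_def)
qed (auto simp: choose_shift_def)

lemma choose_mult_choose_shift:
  assumes "i \<le> n" "m \<le> n"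
  shows "int (n choose i) * choose_shift (n - i) i m = int (n choose m) * int (m choose i)"
proof (cases "i \<le> m")
  case True
  then show ?thesis
    using choose_mult[OF True assms(2)] by (simp add: choose_shift_def flip: of_nat_mult)
qed (simp add: choose_shift_def)

lemma choose_mult_choose_shift_compl:
  assumes "i \<le> n" "m \<le> n"
  shows "int (n choose i) * choose_shift i (n - i) m = int (n choose m) * int (m choose (n - i))"
  using choose_mult_choose_shift[of "n - i" n m] assms by (simp add: binomial_symmetric[of i n, symmetric])

lemma alternating_sum_choose_add:
  "(\<Sum>l\<le>A. (-1) ^ l * int (A choose l) * int ((c + l) choose m))
     = (-1) ^ A * choose_shift c A m"
proof (induction A arbitrary: c)
  case (Suc A)
  let ?f = "\<lambda>c l. (-1) ^ l * int (A choose l) * int ((c + l) choose m)"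
  have "(\<Sum>l\<le>Suc A. (-1) ^ l * int (Suc A choose l) * int ((c + l) choose m))
      = (\<Sum>l\<le>A. ?f c l) - (\<Sum>l\<le>A. ?f (Suc c) l)"
  proof -
    have "(\<Sum>l\<le>Suc A. (-1) ^ l * int (Suc A choose l) * int ((c + l) choose m))
        = int (c choose m) + (\<Sum>l\<le>A. (-1) ^ Suc l * int (A choose Suc l) * int ((c + Suc l) choose m))
          + (\<Sum>l\<le>A. (-1) ^ Suc l * int (A choose l) * int ((c + Suc l) choose m))"
      by (subst sum.atMost_Suc_shift) (simp add: sum.distrib ring_distribs del: power_Suc sum.atMost_Suc)
    moreover have "(\<Sum>l\<le>Suc A. ?f c l) = int (c choose m)
        + (\<Sum>l\<le>A. (-1) ^ Suc l * int (A choose Suc l) * int ((c + Suc l) choose m))"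
      by (subst sum.atMost_Suc_shift) (simp del: power_Suc sum.atMost_Suc)
    moreover have "(\<Sum>l\<le>Suc A. ?f c l) = (\<Sum>l\<le>A. ?f c l)"
      by simp
    ultimately show ?thesis by (simp add: sum_negf[symmetric])
  qed
  also have "\<dots> = (-1) ^ A * (choose_shift c A m - choose_shift (Suc c) A m)"
    using Suc.IH[of c] Suc.IH[of "Suc c"] by (simp add: algebra_simps)
  also have "\<dots> = (-1) ^ Suc A * choose_shift c (Suc A) m"
  proof (cases "Suc A \<le> m")
    case True
    then have "m - A = Suc (m - Suc A)" by simp
    then show ?thesis using True by (simp add: choose_shift_def algebra_simps)
  next
    case False
    then show ?thesis by (cases "A = m") (auto simp: choose_shift_def)
  qed
  finally show ?case .
qed (simp add: choose_shift_def)

lemma alternating_sum_choose_shift: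
  assumes "A + B < N"
  shows "(\<Sum>j<N. (-1) ^ j * int (j choose m) * choose_shift A B j) = (-1) ^ (A + B) * choose_shift B A m"
proof -
  have "(\<Sum>j<N. (-1) ^ j * int (j choose m) * choose_shift A B j)
      = (\<Sum>j\<in>{B..B + A}. (-1) ^ j * int (j choose m) * choose_shift A B j)"
    using assms by (intro sum.mono_neutral_right) (auto simp: choose_shift_def)
  also have "{B..B + A} = (+) B ` {..A}"
    by (simp add: atLeast0AtMost[symmetric] add.commute)
  also have "(\<Sum>j\<in>(+) B ` {..A}. (-1) ^ j * int (j choose m) * choose_shift A B j)
      = (-1) ^ B * (\<Sum>l\<le>A. (-1) ^ l * int (A choose l) * int ((B + l) choose m))"
    by (subst sum.reindex) (auto simp: inj_on_def choose_shift_def sum_distrib_left power_add algebra_simps)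
  also have "\<dots> = (-1) ^ (A + B) * choose_shift B A m"
    by (simp add: alternating_sum_choose_add power_add)
  finally show ?thesis .
qed

lemma alternating_sum_choose_lessThan:
  assumes "m < A"
  shows "(\<Sum>j<A. (-1) ^ j * int (j choose m) * int (A choose j)) = - ((-1) ^ A * int (A choose m))"
  using alternating_sum_choose_shift[of A 0 "Suc A" m] assms by (simp add: choose_shift_def)

lemma sum_upper_half_alternating_choose:
  assumes "odd n" "m < n"
  shows "(\<Sum>i = n div 2 + 1..n - 1. (-1) ^ i * (int (m choose i) - int (m choose (n - i))))
    = (if m = 0 then 0 else -1)"
proof -
  let ?f = "\<lambda>i. (-1) ^ i * int (m choose i)" and ?h = "n div 2 + 1"
  have n: "n = Suc (2 * (n div 2))" using assms(1) by simp
  have "(\<Sum>i = ?h..n - 1. (-1) ^ i * int (m choose (n - i))) = (\<Sum>j = 1..n div 2. (-1) ^ (n - j) * int (m choose j))"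
  proof (rule sum.reindex_bij_witness[where i = "\<lambda>j. n - j" and j = "\<lambda>i. n - i"])
    fix i assume "i \<in> {?h..n - 1}"
    then show "n - (n - i) = i" "n - i \<in> {1..n div 2}"
      and "(-1) ^ (n - (n - i)) * int (m choose (n - i)) = (-1) ^ i * int (m choose (n - i))"
      using n by auto
  next
    fix j assume "j \<in> {1..n div 2}"
    then show "n - (n - j) = j" "n - j \<in> {?h..n - 1}" using n by auto
  qed
  also have "\<dots> = (\<Sum>j = 1..n div 2. - ?f j)"
    by (rule sum.cong) (use assms(1) in \<open>auto simp: minus_one_power_iff\<close>)
  also have "\<dots> = - (\<Sum>j = 1..n div 2. ?f j)"
    by (simp add: sum_negf)
  finally have reflect: "(\<Sum>i = ?h..n - 1. (-1) ^ i * int (m choose (n - i))) = - (\<Sum>j = 1..n div 2. ?f j)" .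
  have "{1..n div 2} = {1..<?h}" "{?h..n - 1} = {?h..<n}"
    using n by auto
  then have "(\<Sum>j = 1..n div 2. ?f j) + (\<Sum>i = ?h..n - 1. ?f i) = (\<Sum>i = 1..<n. ?f i)"
    using sum.atLeastLessThan_concat[of 1 ?h n ?f] n by simp
  also have "(\<Sum>i = 1..<n. ?f i) = (\<Sum>i\<le>m. ?f i) - 1"
  proof -
    have "(\<Sum>i<n. ?f i) = (\<Sum>i\<le>m. ?f i)"
      using assms(2) by (intro sum.mono_neutral_right) auto
    then show ?thesis
      using sum.atLeast_Suc_lessThan[of 0 n ?f] assms(2) by (simp add: atLeast0LessThan)
  qed
  also have "\<dots> = (if m = 0 then 0 else -1)"
    using choose_alternating_sum[of m, where 'a = int] by simp
  finally show ?thesis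
    using reflect by (simp add: sum_subtractf right_diff_distrib)
qed

section \<open>cd-words and flag vectors\<close>

lemma length_le_cdeg: "length w \<le> cdeg w"
  by (induction w rule: cdeg.induct) auto

lemma cdwords_eq: "cdwords m = {w. cdeg w = m}"
  unfolding cdwords_def using length_le_cdeg by auto

lemma finite_cdwords: "finite (cdwords m)"
proof (rule finite_subset)
  show "cdwords m \<subseteq> {w. set w \<subseteq> {C, D} \<and> length w \<le> m}"
    unfolding cdwords_def by (auto intro: cdl.exhaust)
  show "finite {w. set w \<subseteq> {C, D} \<and> length w \<le> m}"
    by (rule finite_lists_length_le) simp
qed

lemma cdeg_append [simp]: "cdeg (v @ w) = cdeg v + cdeg w"
  by (induction v rule: cdeg.induct) auto

lemma cdeg_eq_0_iff: "cdeg w = 0 \<longleftrightarrow> w = []"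
  by (cases w rule: cdeg.cases) auto

lemma cdeg_eq_1_iff: "cdeg w = Suc 0 \<longleftrightarrow> w = [C]"
  by (cases w rule: cdeg.cases) (auto simp: cdeg_eq_0_iff)

lemma cdwords_0: "cdwords 0 = {[]}"
  by (auto simp: cdwords_eq cdeg_eq_0_iff)

lemma cdwords_1: "cdwords (Suc 0) = {[C]}"
  by (auto simp: cdwords_eq cdeg_eq_1_iff)

lemma cdwords_Suc_Suc_Cons:
  "cdwords (Suc (Suc N)) = (\<lambda>w. C # w) ` cdwords (Suc N) \<union> (\<lambda>w. D # w) ` cdwords N"
proof -
  have "w \<in> (\<lambda>w. C # w) ` cdwords (Suc N) \<union> (\<lambda>w. D # w) ` cdwords N"
    if "cdeg w = Suc (Suc N)" for w
    using that by (cases w rule: cdeg.cases) (auto simp: cdwords_eq)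
  then show ?thesis by (auto simp: cdwords_eq)
qed

lemma cdwords_Suc_Suc_snoc:
  "cdwords (Suc (Suc N)) = (\<lambda>w. w @ [C]) ` cdwords (Suc N) \<union> (\<lambda>w. w @ [D]) ` cdwords N"
proof -
  have "w \<in> (\<lambda>w. w @ [C]) ` cdwords (Suc N) \<union> (\<lambda>w. w @ [D]) ` cdwords N"
    if "cdeg w = Suc (Suc N)" for w
  proof (cases w rule: rev_cases)
    case (snoc v x)
    then show ?thesis using that by (cases x) (auto simp: cdwords_eq)
  qed (use that in simp)
  then show ?thesis by (auto simp: cdwords_eq)
qed

lemma sum_cdwords_Suc_Suc_Cons:
  "(\<Sum>w\<in>cdwords (Suc (Suc N)). h w) = (\<Sum>w\<in>cdwords (Suc N). h (C # w)) + (\<Sum>w\<in>cdwords N. h (D # w))"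
  unfolding cdwords_Suc_Suc_Cons
  by (subst sum.union_disjoint) (auto simp: finite_cdwords sum.reindex)

lemma sum_cdwords_Suc_Suc_snoc:
  "(\<Sum>w\<in>cdwords (Suc (Suc N)). h w) = (\<Sum>w\<in>cdwords (Suc N). h (w @ [C])) + (\<Sum>w\<in>cdwords N. h (w @ [D]))"
  unfolding cdwords_Suc_Suc_snoc
  by (subst sum.union_disjoint) (auto simp: finite_cdwords sum.reindex inj_on_def)

text \<open>Coefficient of the ab-word \<open>s\<close> in \<open>w(a + 2b, ab + ba + 2bb)\<close>, the image of \<open>w(a + b, ab + ba)\<close>
  under \<open>a \<mapsto> a + b\<close>.\<close>
fun flag_weight :: "cdl list \<Rightarrow> bool list \<Rightarrow> nat" where
  "flag_weight [] [] = 1"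
| "flag_weight (C # w) (x # s) = (if x then 2 else 1) * flag_weight w s"
| "flag_weight (D # w) (x # y # s) = (if x \<and> y then 2 else if x \<or> y then 1 else 0) * flag_weight w s"
| "flag_weight _ _ = 0"

lemma flag_weight_append:
  "cdeg v = length s \<Longrightarrow> flag_weight (v @ w) (s @ t) = flag_weight v s * flag_weight w t"
  by (induction v s rule: flag_weight.induct) (auto simp: cdeg_eq_0_iff)

fun words_below :: "bool list \<Rightarrow> bool list set" where
  "words_below [] = {[]}"
| "words_below (x # s) = (\<lambda>u. False # u) ` words_below s \<union> (if x then (\<lambda>u. True # u) ` words_below s else {})"

lemma finite_words_below: "finite (words_below s)"
  by (induction s) auto

lemma words_below_iff: "u \<in> words_below s \<longleftrightarrow> length u = length s \<and> (\<forall>i<length s. u ! i \<longrightarrow> s ! i)"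
proof (induction s arbitrary: u)
  case (Cons x s)
  then show ?case
    by (cases u) (auto simp: All_less_Suc2)
qed auto

lemma sum_words_below_Cons:
  "(\<Sum>u\<in>words_below (x # s). h u)
     = (\<Sum>u\<in>words_below s. h (False # u)) + (if x then (\<Sum>u\<in>words_below s. h (True # u)) else 0)"
  by (subst words_below.simps, subst sum.union_disjoint) (auto simp: finite_words_below sum.reindex)

lemma sum_words_below_expcount: "(\<Sum>u\<in>words_below s. expcount w u) = flag_weight w s"
  by (induction w s rule: flag_weight.induct) (auto simp: sum_words_below_Cons simp del: words_below.simps(2))

lemma length_uword [simp]: "length (uword n S) = n"
  by (simp add: uword_def)

lemma nth_uword: "i < n \<Longrightarrow> uword n S ! i = (Suc i \<in> S)"
  by (simp add: uword_def)

lemma uword_Suc: "uword (Suc n) S = uword n S @ [Suc n \<in> S]"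
  by (simp add: uword_def)

lemma inj_on_uword: "inj_on (uword n) (Pow {1..n})"
proof (rule inj_onI)
  fix S T assume S: "S \<in> Pow {1..n}" and T: "T \<in> Pow {1..n}" and eq: "uword n S = uword n T"
  have "x \<in> S \<longleftrightarrow> x \<in> T" for x
  proof (cases "x \<in> {1..n}")
    case True
    then obtain i where "x = Suc i" "i < n" by (cases x) auto
    then show ?thesis using nth_uword[of i n S] nth_uword[of i n T] eq by simp
  qed (use S T in auto)
  then show "S = T" by blast
qed

lemma ex_uword:
  assumes "length u = n"
  shows "\<exists>S\<subseteq>{1..n}. u = uword n S"
proof
  let ?S = "Suc ` {i. i < n \<and> u ! i}"
  have "u = uword n ?S"
    using assms by (auto simp: list_eq_iff_nth_eq nth_uword)
  then show "?S \<subseteq> {1..n} \<and> u = uword n ?S" by auto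
qed

lemma uword_Pow: "S \<subseteq> {1..n} \<Longrightarrow> uword n ` Pow S = words_below (uword n S)"
proof
  assume S: "S \<subseteq> {1..n}"
  show "uword n ` Pow S \<subseteq> words_below (uword n S)"
    by (auto simp: words_below_iff nth_uword)
  show "words_below (uword n S) \<subseteq> uword n ` Pow S"
  proof
    fix u assume u: "u \<in> words_below (uword n S)"
    let ?T = "{j \<in> S. u ! (j - 1)}"
    have "uword n ?T = u"
      using u by (auto simp: words_below_iff list_eq_iff_nth_eq nth_uword)
    then show "u \<in> uword n ` Pow S" by (intro image_eqI[of _ _ ?T]) auto
  qed
qed

lemma fvec_eq_sum_flag_weight:
  assumes "S \<subseteq> {1..n}"
  shows "fvec n \<Phi> S = (\<Sum>w\<in>cdwords n. \<Phi> w * int (flag_weight w (uword n S)))"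
proof -
  have inj: "inj_on (uword n) (Pow S)"
    using assms by (intro inj_on_subset[OF inj_on_uword]) auto
  have weight: "(\<Sum>T\<in>Pow S. expcount w (uword n T)) = flag_weight w (uword n S)" for w
  proof -
    have "(\<Sum>T\<in>Pow S. expcount w (uword n T)) = (\<Sum>u\<in>uword n ` Pow S. expcount w u)"
      by (simp add: sum.reindex[OF inj])
    then show ?thesis
      by (simp add: uword_Pow[OF assms] sum_words_below_expcount)
  qed
  have "fvec n \<Phi> S = (\<Sum>w\<in>cdwords n. \<Phi> w * int (\<Sum>T\<in>Pow S. expcount w (uword n T)))"
    by (simp add: fvec_def abcoef_def sum.swap[of _ "Pow S"] sum_distrib_left)
  then show ?thesis
    by (simp only: weight)
qed

lemma abcoef_Nil: "abcoef \<Phi> [] = \<Phi> []"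
  by (simp add: abcoef_def cdwords_0)

lemma abcoef_single: "abcoef \<Phi> [x] = \<Phi> [C]"
  by (simp add: abcoef_def cdwords_1)

lemma abcoef_Cons_Cons:
  "abcoef \<Phi> (x # y # u)
     = abcoef (\<lambda>w. \<Phi> (C # w)) (y # u) + (if x \<noteq> y then abcoef (\<lambda>w. \<Phi> (D # w)) u else 0)"
  unfolding abcoef_def by (simp add: sum_cdwords_Suc_Suc_Cons)

lemma abcoef_diff: "abcoef (\<lambda>w. f w - g w) u = abcoef f u - abcoef g u"
  unfolding abcoef_def by (simp add: left_diff_distrib sum_subtractf)

lemma fvec_diff: "fvec n (\<lambda>w. f w - g w) S = fvec n f S - fvec n g S"
  unfolding fvec_def by (simp add: abcoef_diff sum_subtractf)

text \<open>The coefficients of \<open>ba\<dots>\<close> and \<open>aa\<dots>\<close> differ by the \<open>d\<dots>\<close>-part of \<open>\<Phi>\<close>, and those of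
  \<open>aa\<dots>\<close> and \<open>bb\<dots>\<close> are given by its \<open>c\<dots>\<close>-part; induct on both parts.\<close>
lemma cdpoly_eq_0_if_abcoef_eq_0:
  assumes "\<And>u. length u = N \<Longrightarrow> abcoef \<Phi> u = 0" and "cdeg w = N"
  shows "\<Phi> w = 0"
  using assms
proof (induction N arbitrary: \<Phi> w rule: less_induct)
  case (less N)
  consider "N = 0" | "N = Suc 0" | K where "N = Suc (Suc K)"
    by (metis not0_implies_Suc)
  then show ?case
  proof cases
    case 1
    then show ?thesis using less.prems abcoef_Nil[of \<Phi>] cdeg_eq_0_iff[of w] by auto
  next
    case 2
    then show ?thesis using less.prems abcoef_single[of \<Phi> True] cdeg_eq_1_iff[of w] by auto
  next
    case (3 K)
    have D: "\<Phi> (D # v) = 0" if "cdeg v = K" for v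
    proof (rule less.IH[of K "\<lambda>w. \<Phi> (D # w)"])
      fix u :: "bool list" assume "length u = K"
      then have "abcoef \<Phi> (True # False # u) = 0" "abcoef \<Phi> (False # False # u) = 0"
        using less.prems(1) 3 by auto
      then show "abcoef (\<lambda>w. \<Phi> (D # w)) u = 0" by (simp add: abcoef_Cons_Cons)
    qed (use 3 that in auto)
    have C: "\<Phi> (C # v) = 0" if "cdeg v = Suc K" for v
    proof (rule less.IH[of "Suc K" "\<lambda>w. \<Phi> (C # w)"])
      fix u :: "bool list" assume "length u = Suc K"
      then obtain y u' where u: "u = y # u'" by (cases u) auto
      have "abcoef \<Phi> (y # y # u') = 0" using less.prems(1) \<open>length u = Suc K\<close> 3 u by auto
      then show "abcoef (\<lambda>w. \<Phi> (C # w)) u = 0" using u by (simp add: abcoef_Cons_Cons)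
    qed (use 3 that in auto)
    show ?thesis
      using less.prems(2) 3 C D by (cases w rule: cdeg.cases) auto
  qed
qed

lemma sum_Pow_insert:
  assumes "finite A" "x \<notin> A"
  shows "(\<Sum>U\<in>Pow (insert x A). f U) = (\<Sum>U\<in>Pow A. f U) + (\<Sum>U\<in>Pow A. f (insert x U))"
proof -
  have inj: "inj_on (insert x) (Pow A)"
    using assms(2) by (auto intro!: inj_onI simp: insert_eq_iff)
  have "(\<Sum>U\<in>Pow (insert x A). f U) = (\<Sum>U\<in>Pow A. f U) + (\<Sum>U\<in>insert x ` Pow A. f U)"
    unfolding Pow_insert using assms by (intro sum.union_disjoint) auto
  then show ?thesis by (simp add: sum.reindex[OF inj])
qed

lemma moebius_inversion_Pow:
  "finite S \<Longrightarrow> (\<Sum>T\<in>Pow S. (-1) ^ card (S - T) * (\<Sum>U\<in>Pow T. a U)) = (a S :: int)"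
proof (induction S arbitrary: a rule: finite_induct)
  case (insert x F)
  have split: "(-1) ^ card (insert x F - T) * (\<Sum>U\<in>Pow T. a U) + (-1) ^ card (F - T) * (\<Sum>U\<in>Pow (insert x T). a U)
      = (-1) ^ card (F - T) * (\<Sum>U\<in>Pow T. a (insert x U))"
    if T: "T \<in> Pow F" for T
  proof -
    have "finite T" "x \<notin> T" using T insert(1,2) finite_subset by auto
    moreover have "insert x F - T = insert x (F - T)" using T insert(2) by auto
    ultimately show ?thesis using insert(1,2) by (simp add: sum_Pow_insert algebra_simps)
  qed
  have "insert x F - insert x T = F - T" for T using insert(2) by auto
  then have "(\<Sum>T\<in>Pow (insert x F). (-1) ^ card (insert x F - T) * (\<Sum>U\<in>Pow T. a U))
      = (\<Sum>T\<in>Pow F. (-1) ^ card (F - T) * (\<Sum>U\<in>Pow T. a (insert x U)))"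
    by (simp add: sum_Pow_insert[OF insert(1,2)] split flip: sum.distrib)
  then show ?case
    using insert.IH[of "\<lambda>U. a (insert x U)"] by simp
qed simp

lemma cdindex_eqI:
  assumes "\<And>w. cdeg w \<noteq> n \<Longrightarrow> \<Phi> w = 0"
    and "\<And>S. S \<subseteq> {1..n} \<Longrightarrow> abcoef \<Phi> (uword n S) = flagh n i S"
  shows "cdindex n i = \<Phi>"
  unfolding cdindex_def
proof (rule the_equality)
  fix \<Psi>
  assume \<Psi>: "(\<forall>w. cdeg w \<noteq> n \<longrightarrow> \<Psi> w = 0) \<and> (\<forall>S. S \<subseteq> {1..n} \<longrightarrow> abcoef \<Psi> (uword n S) = flagh n i S)"
  have "\<Psi> w - \<Phi> w = 0" for w
  proof (cases "cdeg w = n")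
    case True
    show ?thesis
    proof (rule cdpoly_eq_0_if_abcoef_eq_0[where \<Phi> = "\<lambda>w. \<Psi> w - \<Phi> w", OF _ True])
      fix u :: "bool list" assume "length u = n"
      then obtain S where "S \<subseteq> {1..n}" "u = uword n S" using ex_uword by blast
      then show "abcoef (\<lambda>w. \<Psi> w - \<Phi> w) u = 0" using \<Psi> assms(2) by (simp add: abcoef_diff)
    qed
  qed (use \<Psi> assms(1) in auto)
  then show "\<Psi> = \<Phi>" by auto
qed (use assms in blast)

section \<open>Flag vectors of posets with boolean lower intervals\<close>

fun binom_chain :: "nat \<Rightarrow> nat list \<Rightarrow> nat" where
  "binom_chain p [] = 1"
| "binom_chain p (x # xs) = (x choose p) * binom_chain x xs"

text \<open>\<open>multinom0 S = multinom S\<close> and \<open>max0 S = Max S\<close> for \<open>S \<noteq> {}\<close>, but unlike \<open>multinom\<close> and \<open>Max\<close>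
  these are meaningful on \<open>{}\<close>: \<open>multinom0 {} = 1\<close> and \<open>max0 {} = 0\<close>.\<close>
definition multinom0 :: "nat set \<Rightarrow> nat" where
  "multinom0 S = binom_chain 0 (sorted_list_of_set S)"

definition max0 :: "nat set \<Rightarrow> nat" where
  "max0 S = Max (insert 0 S)"

lemma binom_chain_snoc: "binom_chain p (xs @ [y]) = binom_chain p xs * (y choose last (p # xs))"
  by (induction xs arbitrary: p) auto

lemma sorted_list_of_set_insert_greater:
  assumes "finite S" "\<forall>y\<in>S. y < x"
  shows "sorted_list_of_set (insert x S) = sorted_list_of_set S @ [x]"
proof (rule sorted_distinct_set_unique)
  show "sorted (sorted_list_of_set S @ [x])"
    using assms by (auto simp: sorted_append less_imp_le)
  show "distinct (sorted_list_of_set S @ [x])"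
    using assms by auto
qed (use assms in \<open>auto simp del: sorted_list_of_set_insert_remove\<close>)

lemma multinom0_empty [simp]: "multinom0 {} = 1"
  by (simp add: multinom0_def)

lemma max0_empty [simp]: "max0 {} = 0"
  by (simp add: max0_def)

lemma max0_eq_Max: "finite S \<Longrightarrow> S \<noteq> {} \<Longrightarrow> max0 S = Max S"
  by (simp add: max0_def)

lemma max0_insert_greater: "finite S \<Longrightarrow> \<forall>y\<in>S. y < x \<Longrightarrow> max0 (insert x S) = x"
  unfolding max0_def by (rule Max_eqI) auto

lemma last_sorted_list_of_set: "finite S \<Longrightarrow> last (0 # sorted_list_of_set S) = max0 S"
proof (cases "S = {}")
  case False
  assume fin: "finite S"
  let ?m = "Max S"
  have "insert ?m (S - {?m}) = S" "\<forall>y\<in>S - {?m}. y < ?m"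
    using fin False by (auto simp: less_le intro: Max_in)
  then have "sorted_list_of_set S = sorted_list_of_set (S - {?m}) @ [?m]"
    using sorted_list_of_set_insert_greater[of "S - {?m}" ?m] fin by (metis finite_Diff)
  then show ?thesis using fin False by (simp add: max0_eq_Max)
qed simp

lemma multinom0_insert_greater:
  assumes "finite S" "\<forall>y\<in>S. y < x"
  shows "multinom0 (insert x S) = multinom0 S * (x choose max0 S)"
  by (simp only: multinom0_def sorted_list_of_set_insert_greater[OF assms] binom_chain_snoc
      last_sorted_list_of_set[OF assms(1)])

lemma fact_mult_binom_chain:
  "sorted (p # xs) \<Longrightarrow>
     fact p * prod_list (map fact (gaps_from p xs)) * binom_chain p xs = (fact (last (p # xs)) :: nat)"
proof (induction xs arbitrary: p)
  case (Cons x xs)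
  then have "p \<le> x" "sorted (x # xs)" by auto
  have "fact p * prod_list (map fact (gaps_from p (x # xs))) * binom_chain p (x # xs)
      = (fact p * fact (x - p) * (x choose p)) * (prod_list (map fact (gaps_from x xs)) * binom_chain x xs)"
    by (simp add: algebra_simps)
  also have "\<dots> = fact x * (prod_list (map fact (gaps_from x xs)) * binom_chain x xs)"
    by (simp only: binomial_fact_lemma[OF \<open>p \<le> x\<close>])
  also have "\<dots> = fact (last (p # x # xs))"
    using Cons.IH[OF \<open>sorted (x # xs)\<close>] by (simp add: algebra_simps)
  finally show ?case .
qed simp

lemma multinom_eq_multinom0:
  assumes "finite S" "S \<noteq> {}"
  shows "multinom S = multinom0 S"
proof -
  let ?P = "prod_list (map fact (gaps_from 0 (sorted_list_of_set S))) :: nat"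
  have "?P * multinom0 S = fact (Max S)"
    using fact_mult_binom_chain[of 0 "sorted_list_of_set S"] last_sorted_list_of_set[OF assms(1)]
    by (simp add: multinom0_def max0_eq_Max[OF assms])
  moreover have "0 < prod_list (map fact xs :: nat list)" for xs by (induction xs) auto
  ultimately show ?thesis unfolding multinom_def by (metis nonzero_mult_div_cancel_left not_gr0)
qed

text \<open>The flag \<open>f\<close>-vector of a poset of rank \<open>N + 1\<close> in which every element of rank \<open>< N\<close> has a boolean
  lower interval: \<open>g m\<close> counts the elements of rank \<open>m\<close>, and \<open>k m\<close> the pairs \<open>x < y\<close> with ranks \<open>m\<close> and \<open>N\<close>.\<close>
definition lower_boolean_flag :: "nat \<Rightarrow> (nat \<Rightarrow> int) \<Rightarrow> (nat \<Rightarrow> int) \<Rightarrow> nat set \<Rightarrow> int" where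
  "lower_boolean_flag N g k S =
     (if N \<in> S then int (multinom0 (S - {N})) * k (max0 (S - {N})) else int (multinom0 S) * g (max0 S))"

lemma lower_boolean_flag_diff:
  "lower_boolean_flag N g k S - lower_boolean_flag N g' k' S
     = lower_boolean_flag N (\<lambda>m. g m - g' m) (\<lambda>m. k m - k' m) S"
  by (simp add: lower_boolean_flag_def algebra_simps)

lemma sum_lower_boolean_flag:
  "(\<Sum>i\<in>I. c i * lower_boolean_flag N (g i) (k i) S)
     = lower_boolean_flag N (\<lambda>m. \<Sum>i\<in>I. c i * g i m) (\<lambda>m. \<Sum>i\<in>I. c i * k i m) S"
  by (simp add: lower_boolean_flag_def sum_distrib_left algebra_simps)

lemma lower_boolean_flag_cong:
  assumes "0 < N" "S \<subseteq> {1..N}" "\<And>m. m < N \<Longrightarrow> g m = g' m" "\<And>m. m < N \<Longrightarrow> k m = k' m"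
  shows "lower_boolean_flag N g k S = lower_boolean_flag N g' k' S"
proof -
  have "max0 T < N" if "T \<subseteq> {1..<N}" for T
    using that assms(1) finite_subset[OF that] unfolding max0_def by (subst Max_less_iff) auto
  moreover have "S - {N} \<subseteq> {1..<N}" "N \<notin> S \<Longrightarrow> S \<subseteq> {1..<N}"
    using assms(2) by (auto simp: subset_iff less_le)
  ultimately have "max0 (S - {N}) < N" "N \<notin> S \<Longrightarrow> max0 S < N"
    by blast+
  then show ?thesis using assms(3,4) by (simp add: lower_boolean_flag_def)
qed

lemma lower_boolean_flag_choose:
  assumes "S \<subseteq> {1..M}"
  shows "lower_boolean_flag M g (\<lambda>m. int (M choose m) * g M) S = int (multinom0 S) * g (max0 S)"
proof (cases "M \<in> S")
  case True
  let ?S' = "S - {M}"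
  have fin: "finite ?S'" and lt: "\<forall>y\<in>?S'. y < M" and S: "S = insert M ?S'"
    using assms True finite_subset by fastforce+
  show ?thesis
    using True multinom0_insert_greater[OF fin lt] max0_insert_greater[OF fin lt]
    unfolding lower_boolean_flag_def by (subst (2 3) S) simp
qed (simp add: lower_boolean_flag_def)

lemma lower_boolean_flag_Suc_Suc:
  assumes S: "S \<subseteq> {1..Suc (Suc M)}" and top: "k (Suc M) = 2 * g (Suc M)"
  defines "a \<equiv> Suc M \<in> S" and "b \<equiv> Suc (Suc M) \<in> S"
  shows "lower_boolean_flag (Suc (Suc M)) g k S
    = int (flag_weight [C] [b])
        * lower_boolean_flag (Suc M) g (\<lambda>m. int (Suc M choose m) * g (Suc M) - k m + 2 * g m)
            (S - {Suc (Suc M)})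
      + int (flag_weight [D] [a, b])
        * lower_boolean_flag M (\<lambda>m. k m - 2 * g m) (\<lambda>m. int (M choose m) * (k M - 2 * g M))
            (S - {Suc M, Suc (Suc M)})"
proof -
  define S1 where "S1 = S - {Suc (Suc M)}"
  define S0 where "S0 = S - {Suc M, Suc (Suc M)}"
  define m where "m = max0 S0"
  define P where "P = int (multinom0 S0)"
  have S0: "S0 \<subseteq> {1..M}" using S unfolding S0_def by auto
  then have fin: "finite S0" and lt: "\<forall>y\<in>S0. y < Suc M" using finite_subset by fastforce+
  have S1: "S1 = (if a then insert (Suc M) S0 else S0)" and "S1 - {Suc M} = S0" "Suc M \<notin> S0"
    unfolding S1_def S0_def a_def by auto
  then have "lower_boolean_flag (Suc M) g K S1 = (if a then P * K m else P * g m)" for K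
    unfolding lower_boolean_flag_def P_def m_def by auto
  moreover have "lower_boolean_flag M (\<lambda>m. k m - 2 * g m) (\<lambda>m. int (M choose m) * (k M - 2 * g M)) S0
      = P * (k m - 2 * g m)"
    unfolding P_def m_def using lower_boolean_flag_choose[OF S0, of "\<lambda>m. k m - 2 * g m"] by simp
  moreover have "lower_boolean_flag (Suc (Suc M)) g k S
      = (if b then int (multinom0 S1) * k (max0 S1) else int (multinom0 S1) * g (max0 S1))"
    unfolding lower_boolean_flag_def S1_def b_def by auto
  moreover have "int (multinom0 S1) = (if a then P * int (Suc M choose m) else P)"
    using multinom0_insert_greater[OF fin lt] S1 unfolding P_def m_def by simp
  moreover have "max0 S1 = (if a then Suc M else m)"
    using max0_insert_greater[OF fin lt] S1 unfolding m_def by simp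
  ultimately show ?thesis
    unfolding S1_def[symmetric] S0_def[symmetric]
    using top by (cases a; cases b) (simp_all add: algebra_simps)
qed

text \<open>Relations of Dehn--Sommerville type on \<open>g\<close> and \<open>k\<close>; they are what makes
  \<open>lower_boolean_flag N g k\<close> the flag vector of a cd-polynomial.\<close>
definition dehn_sommerville :: "nat \<Rightarrow> (nat \<Rightarrow> int) \<Rightarrow> (nat \<Rightarrow> int) \<Rightarrow> bool" where
  "dehn_sommerville N g k \<longleftrightarrow>
     (\<forall>m<N. (\<Sum>j<N. (-1) ^ j * int (j choose m) * g j) = (-1) ^ N * (g m - k m)) \<and>
     (\<forall>m<N. (\<Sum>j<N. (-1) ^ j * int (j choose m) * k j) = - ((-1) ^ N * k m))"

lemma dehn_sommerville_top:
  assumes "dehn_sommerville (Suc K) g k"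
  shows "k K = 2 * g K"
proof -
  have "(\<Sum>j<Suc K. (-1) ^ j * int (j choose K) * g j) = (-1) ^ Suc K * (g K - k K)"
    using assms unfolding dehn_sommerville_def by blast
  moreover have "(\<Sum>j<K. (-1) ^ j * int (j choose K) * g j) = 0"
    by (rule sum.neutral) auto
  ultimately have "(-1) ^ K * (k K - 2 * g K) = (0::int)"
    by (simp add: algebra_simps)
  then show ?thesis by simp
qed

lemma dehn_sommerville_C:
  assumes E: "dehn_sommerville (Suc (Suc M)) g k"
  shows "dehn_sommerville (Suc M) g (\<lambda>m. int (Suc M choose m) * g (Suc M) - k m + 2 * g m)"
  unfolding dehn_sommerville_def
proof (intro conjI allI impI)
  fix m assume m: "m < Suc M"
  define s :: int where "s = (-1) ^ Suc M"
  define SG where "SG = (\<Sum>j<Suc M. (-1) ^ j * int (j choose m) * g j)"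
  define SK where "SK = (\<Sum>j<Suc M. (-1) ^ j * int (j choose m) * k j)"
  have "SG + s * int (Suc M choose m) * g (Suc M) = - s * (g m - k m)"
    using E m unfolding dehn_sommerville_def SG_def s_def by (simp add: algebra_simps)
  moreover have "SK + s * int (Suc M choose m) * k (Suc M) = s * k m"
    using E m unfolding dehn_sommerville_def SK_def s_def by (simp add: algebra_simps)
  moreover have "(\<Sum>j<Suc M. (-1) ^ j * int (j choose m) * int (Suc M choose j)) = - (s * int (Suc M choose m))"
    unfolding s_def using alternating_sum_choose_lessThan[OF m] .
  moreover have "(\<Sum>j<Suc M. (-1) ^ j * int (j choose m) * (int (Suc M choose j) * g (Suc M) - k j + 2 * g j))
      = g (Suc M) * (\<Sum>j<Suc M. (-1) ^ j * int (j choose m) * int (Suc M choose j)) - SK + 2 * SG"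
    unfolding SK_def SG_def by (simp add: sum_subtractf sum.distrib sum_distrib_left algebra_simps)
  ultimately show
    "(\<Sum>j<Suc M. (-1) ^ j * int (j choose m) * g j)
       = (-1) ^ Suc M * (g m - (int (Suc M choose m) * g (Suc M) - k m + 2 * g m))"
    "(\<Sum>j<Suc M. (-1) ^ j * int (j choose m) * (int (Suc M choose j) * g (Suc M) - k j + 2 * g j))
       = - ((-1) ^ Suc M * (int (Suc M choose m) * g (Suc M) - k m + 2 * g m))"
    using dehn_sommerville_top[OF E] unfolding SG_def[symmetric] s_def[symmetric]
    by (simp_all add: algebra_simps)
qed

lemma dehn_sommerville_D:
  assumes E: "dehn_sommerville (Suc (Suc M)) g k"
  shows "dehn_sommerville M (\<lambda>m. k m - 2 * g m) (\<lambda>m. int (M choose m) * (k M - 2 * g M))"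
  unfolding dehn_sommerville_def
proof (intro conjI allI impI)
  fix m assume m: "m < M"
  define s :: int where "s = (-1) ^ M"
  define SG where "SG = (\<Sum>j<M. (-1) ^ j * int (j choose m) * g j)"
  define SK where "SK = (\<Sum>j<M. (-1) ^ j * int (j choose m) * k j)"
  have "SG + s * int (M choose m) * g M - s * int (Suc M choose m) * g (Suc M) = s * (g m - k m)"
    using E m unfolding dehn_sommerville_def SG_def s_def by (simp add: algebra_simps)
  moreover have "SK + s * int (M choose m) * k M - s * int (Suc M choose m) * k (Suc M) = - (s * k m)"
    using E m unfolding dehn_sommerville_def SK_def s_def by (simp add: algebra_simps)
  moreover have "(\<Sum>j<M. (-1) ^ j * int (j choose m) * int (M choose j)) = - (s * int (M choose m))"
    unfolding s_def using alternating_sum_choose_lessThan[OF m] .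
  moreover have "(\<Sum>j<M. (-1) ^ j * int (j choose m) * (k j - 2 * g j)) = SK - 2 * SG"
    unfolding SK_def SG_def by (simp add: sum_subtractf sum_distrib_left algebra_simps)
  moreover have "(\<Sum>j<M. (-1) ^ j * int (j choose m) * (int (M choose j) * (k M - 2 * g M)))
      = (k M - 2 * g M) * (\<Sum>j<M. (-1) ^ j * int (j choose m) * int (M choose j))"
    by (simp add: sum_distrib_left algebra_simps)
  ultimately show
    "(\<Sum>j<M. (-1) ^ j * int (j choose m) * (k j - 2 * g j))
       = (-1) ^ M * ((k m - 2 * g m) - int (M choose m) * (k M - 2 * g M))"
    "(\<Sum>j<M. (-1) ^ j * int (j choose m) * (int (M choose j) * (k M - 2 * g M)))
       = - ((-1) ^ M * (int (M choose m) * (k M - 2 * g M)))"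
    using dehn_sommerville_top[OF E] unfolding s_def[symmetric]
    by (simp_all add: algebra_simps)
qed

text \<open>The recursion mirrors \<open>lower_boolean_flag_Suc_Suc\<close>: deleting a final \<open>c\<close> or \<open>d\<close> from a
  cd-polynomial with a flag vector of this form leaves flag vectors of the same form.\<close>
fun cd_of_flag :: "nat \<Rightarrow> (nat \<Rightarrow> int) \<Rightarrow> (nat \<Rightarrow> int) \<Rightarrow> cdpoly" where
  "cd_of_flag 0 g k w = (if w = [] then g 0 else 0)"
| "cd_of_flag (Suc 0) g k w = (if w = [C] then g 0 else 0)"
| "cd_of_flag (Suc (Suc M)) g k w =
     (if w = [] then 0
      else if last w = C then
        cd_of_flag (Suc M) g (\<lambda>m. int (Suc M choose m) * g (Suc M) - k m + 2 * g m) (butlast w)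
      else cd_of_flag M (\<lambda>m. k m - 2 * g m) (\<lambda>m. int (M choose m) * (k M - 2 * g M)) (butlast w))"

lemma cdeg_cd_of_flag: "cd_of_flag N g k w \<noteq> 0 \<Longrightarrow> cdeg w = N"
proof (induction N g k w rule: cd_of_flag.induct)
  case (3 M g k w)
  then have "w \<noteq> []" by (auto split: if_splits)
  then have w: "w = butlast w @ [last w]" by simp
  show ?case
  proof (cases "last w")
    case C
    then have "cdeg (butlast w) = Suc M" using 3 \<open>w \<noteq> []\<close> by (auto split: if_splits)
    then show ?thesis using C by (subst w) simp
  next
    case D
    then have "cdeg (butlast w) = M" using 3 \<open>w \<noteq> []\<close> by (auto split: if_splits)
    then show ?thesis using D by (subst w) simp
  qed
qed (auto split: if_splits)

lemma fvec_cd_of_flag_Suc_Suc: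
  assumes S: "S \<subseteq> {1..Suc (Suc M)}"
  defines "a \<equiv> Suc M \<in> S" and "b \<equiv> Suc (Suc M) \<in> S"
  shows "fvec (Suc (Suc M)) (cd_of_flag (Suc (Suc M)) g k) S
    = int (flag_weight [C] [b])
        * fvec (Suc M) (cd_of_flag (Suc M) g (\<lambda>m. int (Suc M choose m) * g (Suc M) - k m + 2 * g m))
            (S - {Suc (Suc M)})
      + int (flag_weight [D] [a, b])
        * fvec M (cd_of_flag M (\<lambda>m. k m - 2 * g m) (\<lambda>m. int (M choose m) * (k M - 2 * g M)))
            (S - {Suc M, Suc (Suc M)})"
proof -
  define K1 where "K1 = (\<lambda>m. int (Suc M choose m) * g (Suc M) - k m + 2 * g m)"
  define G0 where "G0 = (\<lambda>m. k m - 2 * g m)"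
  define K0 where "K0 = (\<lambda>m. int (M choose m) * (k M - 2 * g M))"
  let ?S1 = "S - {Suc (Suc M)}" and ?S0 = "S - {Suc M, Suc (Suc M)}"
  have S1: "?S1 \<subseteq> {1..Suc M}" and S0: "?S0 \<subseteq> {1..M}"
    using S by auto
  have u1: "uword (Suc (Suc M)) S = uword (Suc M) ?S1 @ [b]"
    unfolding b_def by (simp add: uword_Suc) (simp add: uword_def)
  have u0: "uword (Suc (Suc M)) S = uword M ?S0 @ [a, b]"
    unfolding a_def b_def by (simp add: uword_Suc) (simp add: uword_def)
  have "cd_of_flag (Suc (Suc M)) g k (w @ [C]) * int (flag_weight (w @ [C]) (uword (Suc (Suc M)) S))
      = int (flag_weight [C] [b]) * (cd_of_flag (Suc M) g K1 w * int (flag_weight w (uword (Suc M) ?S1)))"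
    if "w \<in> cdwords (Suc M)" for w
    using that by (simp add: u1 flag_weight_append cdwords_eq K1_def del: flag_weight.simps)
  moreover have "cd_of_flag (Suc (Suc M)) g k (w @ [D]) * int (flag_weight (w @ [D]) (uword (Suc (Suc M)) S))
      = int (flag_weight [D] [a, b]) * (cd_of_flag M G0 K0 w * int (flag_weight w (uword M ?S0)))"
    if "w \<in> cdwords M" for w
    using that by (simp add: u0 flag_weight_append cdwords_eq G0_def K0_def del: flag_weight.simps)
  ultimately show ?thesis
    unfolding K1_def[symmetric] G0_def[symmetric] K0_def[symmetric]
      fvec_eq_sum_flag_weight[OF S] fvec_eq_sum_flag_weight[OF S1]
      fvec_eq_sum_flag_weight[OF S0] sum_cdwords_Suc_Suc_snoc sum_distrib_left
    by simp
qed

theorem fvec_cd_of_flag: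
  assumes "dehn_sommerville N g k" and "S \<subseteq> {1..N}"
  shows "fvec N (cd_of_flag N g k) S = lower_boolean_flag N g k S"
  using assms
proof (induction N arbitrary: g k S rule: less_induct)
  case (less N)
  consider "N = 0" | "N = Suc 0" | M where "N = Suc (Suc M)"
    by (metis not0_implies_Suc)
  then show ?case
  proof cases
    case 1
    then have "S = {}" using less.prems(2) by simp
    then show ?thesis
      using 1 by (simp add: fvec_eq_sum_flag_weight cdwords_0 lower_boolean_flag_def uword_def)
  next
    case 2
    then have "S = {} \<or> S = {1}"
      using less.prems(2) by (auto simp: subset_singleton_iff)
    moreover have "k 0 = 2 * g 0"
      using less.prems(1) 2 dehn_sommerville_top[of 0 g k] by simp
    ultimately show ?thesis
      using 2 by (auto simp: fvec_eq_sum_flag_weight cdwords_1 lower_boolean_flag_def uword_def)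
  next
    case (3 M)
    have S: "S \<subseteq> {1..Suc (Suc M)}" and E: "dehn_sommerville (Suc (Suc M)) g k"
      using less.prems 3 by auto
    have "fvec (Suc M) (cd_of_flag (Suc M) g (\<lambda>m. int (Suc M choose m) * g (Suc M) - k m + 2 * g m))
        (S - {Suc (Suc M)})
      = lower_boolean_flag (Suc M) g (\<lambda>m. int (Suc M choose m) * g (Suc M) - k m + 2 * g m)
        (S - {Suc (Suc M)})"
      by (rule less.IH) (use 3 S dehn_sommerville_C[OF E] in auto)
    moreover have "fvec M (cd_of_flag M (\<lambda>m. k m - 2 * g m) (\<lambda>m. int (M choose m) * (k M - 2 * g M)))
        (S - {Suc M, Suc (Suc M)})
      = lower_boolean_flag M (\<lambda>m. k m - 2 * g m) (\<lambda>m. int (M choose m) * (k M - 2 * g M))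
        (S - {Suc M, Suc (Suc M)})"
      by (rule less.IH) (use 3 S dehn_sommerville_D[OF E] in auto)
    ultimately show ?thesis
      unfolding 3 fvec_cd_of_flag_Suc_Suc[OF S]
        lower_boolean_flag_Suc_Suc[of S M k g, OF S dehn_sommerville_top[OF E]]
      by (simp only:)
  qed
qed

section \<open>Counting chains of sets\<close>

definition rank_chains :: "nat set set \<Rightarrow> nat list \<Rightarrow> nat set list set" where
  "rank_chains F rs = {Ys. set Ys \<subseteq> F \<and> sorted_wrt (\<subset>) Ys \<and> map card Ys = rs}"

lemma rank_chains_Nil [simp]: "rank_chains F [] = {[]}"
  by (auto simp: rank_chains_def)

lemma finite_rank_chains:
  assumes "finite V" "F \<subseteq> Pow V"
  shows "finite (rank_chains F rs)"
proof (rule finite_subset)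
  show "rank_chains F rs \<subseteq> {Ys. set Ys \<subseteq> Pow V \<and> length Ys = length rs}"
    using assms(2) by (auto simp: rank_chains_def dest: arg_cong[of _ _ length])
  show "finite {Ys. set Ys \<subseteq> Pow V \<and> length Ys = length rs}"
    using assms(1) by (intro finite_lists_length_eq) simp
qed

lemma rank_chains_snoc:
  assumes down: "\<And>X Y. X \<in> F \<Longrightarrow> Y \<subseteq> X \<Longrightarrow> Y \<noteq> {} \<Longrightarrow> Y \<in> F" and "0 \<notin> set rs"
  shows "rank_chains F (rs @ [r]) = (\<Union>X\<in>{X\<in>F. card X = r}. (\<lambda>Ys. Ys @ [X]) ` rank_chains {Y. Y \<subset> X} rs)"
proof (intro equalityI subsetI)
  fix Zs assume "Zs \<in> rank_chains F (rs @ [r])"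
  then obtain Ys X where "Zs = Ys @ [X]" "map card Ys = rs" "card X = r"
      "set Ys \<subseteq> F" "X \<in> F" "sorted_wrt (\<subset>) (Ys @ [X])"
    unfolding rank_chains_def by (cases Zs rule: rev_cases) auto
  then show "Zs \<in> (\<Union>X\<in>{X\<in>F. card X = r}. (\<lambda>Ys. Ys @ [X]) ` rank_chains {Y. Y \<subset> X} rs)"
    unfolding rank_chains_def by (intro UN_I[of X] image_eqI[of _ _ Ys]) (auto simp: sorted_wrt_append)
next
  fix Zs assume "Zs \<in> (\<Union>X\<in>{X\<in>F. card X = r}. (\<lambda>Ys. Ys @ [X]) ` rank_chains {Y. Y \<subset> X} rs)"
  then obtain X Ys where X: "X \<in> F" "card X = r" and Zs: "Zs = Ys @ [X]"
      and Ys: "set Ys \<subseteq> {Y. Y \<subset> X}" "sorted_wrt (\<subset>) Ys" "map card Ys = rs"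
    unfolding rank_chains_def by blast
  have "Y \<in> F" if "Y \<in> set Ys" for Y
  proof (rule down[OF X(1)])
    show "Y \<subseteq> X" using Ys(1) that by auto
    have "card Y \<in> set rs" using Ys(3) that by auto
    then show "Y \<noteq> {}" using assms(2) by auto
  qed
  then show "Zs \<in> rank_chains F (rs @ [r])"
    using X Ys unfolding Zs rank_chains_def by (auto simp: sorted_wrt_append)
qed

lemma card_rank_chains_snoc:
  assumes "finite V" "F \<subseteq> Pow V"
    and "\<And>X Y. X \<in> F \<Longrightarrow> Y \<subseteq> X \<Longrightarrow> Y \<noteq> {} \<Longrightarrow> Y \<in> F"
    and "sorted_wrt (<) (rs @ [r])" and "0 \<notin> set rs"
  shows "card (rank_chains F (rs @ [r])) = card {X\<in>F. card X = r} * binom_chain 0 (rs @ [r])"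
  using assms
proof (induction rs arbitrary: V F r rule: rev_induct)
  case Nil
  have "rank_chains F [r] = (\<lambda>X. [X]) ` {X\<in>F. card X = r}"
    by (auto simp: rank_chains_def length_Suc_conv)
  then show ?case by (simp add: card_image inj_on_def)
next
  case (snoc r' rs)
  have fin: "finite {X\<in>F. card X = r}" using snoc.prems(1,2) finite_subset by (metis Collect_subset finite_Pow_iff)
  have finX: "finite X" if "X \<in> F" for X using that snoc.prems(1,2) finite_subset by blast
  have finC: "finite (rank_chains {Y. Y \<subset> X} rs')" if "X \<in> F" for X rs'
    using finite_rank_chains[of X "{Y. Y \<subset> X}"] finX[OF that] by auto
  have "rank_chains F ((rs @ [r']) @ [r])
      = (\<Union>X\<in>{X\<in>F. card X = r}. (\<lambda>Ys. Ys @ [X]) ` rank_chains {Y. Y \<subset> X} (rs @ [r']))"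
    using snoc.prems(3,5) by (rule rank_chains_snoc)
  then have "card (rank_chains F ((rs @ [r']) @ [r]))
      = (\<Sum>X\<in>{X\<in>F. card X = r}. card ((\<lambda>Ys. Ys @ [X]) ` rank_chains {Y. Y \<subset> X} (rs @ [r'])))"
    by (simp only:) (rule card_UN_disjoint[OF fin], auto simp: finC)
  also have "\<dots> = (\<Sum>X\<in>{X\<in>F. card X = r}. binom_chain 0 ((rs @ [r']) @ [r]))"
  proof (rule sum.cong)
    fix X assume X: "X \<in> {X\<in>F. card X = r}"
    have lt: "r' < card X" "sorted_wrt (<) (rs @ [r'])" "0 \<notin> set rs"
      using snoc.prems(4,5) X by (auto simp: sorted_wrt_append)
    have "{Y. Y \<subset> X \<and> card Y = r'} = {Y. Y \<subseteq> X \<and> card Y = r'}" using lt(1) by auto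
    then have "card {Y\<in>{Y. Y \<subset> X}. card Y = r'} = card X choose r'"
      using n_subsets[OF finX, of X r'] X by simp
    then have "card (rank_chains {Y. Y \<subset> X} (rs @ [r'])) = (card X choose r') * binom_chain 0 (rs @ [r'])"
      using snoc.IH[of X "{Y. Y \<subset> X}" r'] lt finX X by auto
    then show "card ((\<lambda>Ys. Ys @ [X]) ` rank_chains {Y. Y \<subset> X} (rs @ [r'])) = binom_chain 0 ((rs @ [r']) @ [r])"
      using X binom_chain_snoc[of 0 "rs @ [r']" r] by (simp add: card_image inj_on_def)
  qed simp
  finally show ?case by simp
qed

lemma card_rank_chains_sorted_list_of_set:
  assumes "finite V" "F \<subseteq> Pow V"
    and "\<And>X Y. X \<in> F \<Longrightarrow> Y \<subseteq> X \<Longrightarrow> Y \<noteq> {} \<Longrightarrow> Y \<in> F"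
    and "finite T" "0 \<notin> T"
  shows "card (rank_chains F (sorted_list_of_set T))
    = (if T = {} then 1 else card {X\<in>F. card X = max0 T} * multinom0 T)"
proof (cases "T = {}")
  case False
  let ?m = "Max T"
  have "insert ?m (T - {?m}) = T" "\<forall>y\<in>T - {?m}. y < ?m"
    using assms(4) False by (auto simp: less_le intro: Max_in)
  then have rs: "sorted_list_of_set T = sorted_list_of_set (T - {?m}) @ [?m]"
    using sorted_list_of_set_insert_greater[of "T - {?m}" ?m] assms(4) by (metis finite_Diff)
  have "card (rank_chains F (sorted_list_of_set T)) = card {X\<in>F. card X = ?m} * multinom0 T"
    unfolding multinom0_def rs
    by (rule card_rank_chains_snoc[OF assms(1-3)]) (use assms(4,5) rs[symmetric] in auto)
  then show ?thesis using False assms(4) by (simp add: max0_eq_Max)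
qed simp

lemma card_supersets:
  assumes "finite V" and "W \<subseteq> V"
  shows "int (card {X. X \<subseteq> V \<and> card X = m \<and> W \<subseteq> X}) = choose_shift (card (V - W)) (card W) m"
proof (cases "card W \<le> m")
  case True
  have finW: "finite W" using assms finite_subset by blast
  have "bij_betw (\<lambda>X. X - W) {X. X \<subseteq> V \<and> card X = m \<and> W \<subseteq> X} {Y. Y \<subseteq> V - W \<and> card Y = m - card W}"
  proof (rule bij_betw_byWitness[where f' = "\<lambda>Y. Y \<union> W"])
    show "(\<lambda>X. X - W) ` {X. X \<subseteq> V \<and> card X = m \<and> W \<subseteq> X} \<subseteq> {Y. Y \<subseteq> V - W \<and> card Y = m - card W}"
      using finW by (auto simp: card_Diff_subset)
    show "(\<lambda>Y. Y \<union> W) ` {Y. Y \<subseteq> V - W \<and> card Y = m - card W} \<subseteq> {X. X \<subseteq> V \<and> card X = m \<and> W \<subseteq> X}"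
    proof clarify
      fix Y assume Y: "Y \<subseteq> V - W" "card Y = m - card W"
      then have "card (Y \<union> W) = card Y + card W"
        using assms(1) finW by (subst card_Un_disjoint) (auto intro: finite_subset)
      then show "Y \<union> W \<subseteq> V \<and> card (Y \<union> W) = m \<and> W \<subseteq> Y \<union> W" using Y assms(2) True by auto
    qed
  qed auto
  then have "card {X. X \<subseteq> V \<and> card X = m \<and> W \<subseteq> X} = card {Y. Y \<subseteq> V - W \<and> card Y = m - card W}"
    by (rule bij_betw_same_card)
  then show ?thesis using True assms(1) by (simp add: n_subsets choose_shift_def)
next
  case False
  have "card W \<le> card X" if "X \<subseteq> V" "W \<subseteq> X" for X
    using that assms(1) by (intro card_mono) (auto intro: finite_subset)
  then have "{X. X \<subseteq> V \<and> card X = m \<and> W \<subseteq> X} = {}"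
    using False by auto
  then show ?thesis using False unfolding choose_shift_def by (simp only: card.empty) simp
qed

section \<open>The complexes \<open>\<Lambda>\<^sup>n\<^sub>i\<close>\<close>

lemma Gfaces_iff:
  assumes "i < n"
  shows "X \<in> Gfaces n i \<longleftrightarrow> X \<noteq> {} \<and> X \<subseteq> {0..n} \<and> \<not> {0..i} \<subseteq> X"
  using assms unfolding Gfaces_def facet_def by (auto simp: subset_iff)

lemma facets_containing:
  "R \<subseteq> {0..n} \<Longrightarrow> i < n \<Longrightarrow> {j. j \<le> i \<and> R \<subseteq> facet n j} = {j. j \<le> i \<and> j \<notin> R}"
  unfolding facet_def by auto

text \<open>A ridge \<open>R\<close> misses two vertices, and lies in exactly one facet of \<open>\<Gamma>\<^sup>n\<^sub>i\<close> iff exactly one of them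
  is at most \<open>i\<close>.\<close>
lemma Bfaces_iff:
  assumes "i < n"
  shows "X \<in> Bfaces n i \<longleftrightarrow> X \<noteq> {} \<and> X \<subseteq> {0..n} \<and> \<not> {0..i} \<subseteq> X \<and> \<not> {Suc i..n} \<subseteq> X"
proof
  assume "X \<in> Bfaces n i"
  then obtain R where R: "X \<noteq> {}" "X \<subseteq> R" "R \<subseteq> {0..n}" "card R = n - 1"
      and J: "card {j. j \<le> i \<and> j \<notin> R} = 1"
    unfolding Bfaces_def using facets_containing[OF _ assms] by auto
  then obtain a where "{j. j \<le> i \<and> j \<notin> R} = {a}" using card_1_singletonE by blast
  then have a: "a \<le> i" "a \<notin> R" by auto
  have "card ({0..n} - R) = 2"
    using R(3,4) assms by (simp add: card_Diff_subset finite_subset)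
  then have "\<not> {0..n} - R \<subseteq> {j. j \<le> i \<and> j \<notin> R}"
    using J card_mono[of "{j. j \<le> i \<and> j \<notin> R}" "{0..n} - R"] by auto
  then obtain b where "b \<in> {0..n} - R" "b \<notin> {j. j \<le> i \<and> j \<notin> R}" by blast
  then have b: "Suc i \<le> b" "b \<le> n" "b \<notin> R" by auto
  have "a \<notin> X" "b \<notin> X" using R(2) a b by auto
  then show "X \<noteq> {} \<and> X \<subseteq> {0..n} \<and> \<not> {0..i} \<subseteq> X \<and> \<not> {Suc i..n} \<subseteq> X"
    using R(1-3) a(1) b(1,2) by auto
next
  assume X: "X \<noteq> {} \<and> X \<subseteq> {0..n} \<and> \<not> {0..i} \<subseteq> X \<and> \<not> {Suc i..n} \<subseteq> X"
  then obtain a b where a: "a \<le> i" "a \<notin> X" and b: "Suc i \<le> b" "b \<le> n" "b \<notin> X" by auto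
  define R where "R = {0..n} - {a, b}"
  have "R \<subseteq> {0..n}" "X \<subseteq> R"
    using X a b unfolding R_def by auto
  moreover have "card R = n - 1"
    using a b assms unfolding R_def by (subst card_Diff_subset) auto
  moreover have "{j. j \<le> i \<and> j \<notin> R} = {a}"
    using a b unfolding R_def by auto
  ultimately have "card {j. j \<le> i \<and> R \<subseteq> facet n j} = 1"
    using facets_containing[of R n i] assms by simp
  then show "X \<in> Bfaces n i" unfolding Bfaces_def using X \<open>R \<subseteq> {0..n}\<close> \<open>X \<subseteq> R\<close> \<open>card R = n - 1\<close> by blast
qed

lemma Gfaces_subset_Pow: "i < n \<Longrightarrow> Gfaces n i \<subseteq> Pow {0..n}"
  using Gfaces_iff by blast

lemma Bfaces_subset_Pow: "i < n \<Longrightarrow> Bfaces n i \<subseteq> Pow {0..n}"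
  using Bfaces_iff by blast

lemma Bfaces_subset_Gfaces: "i < n \<Longrightarrow> Bfaces n i \<subseteq> Gfaces n i"
  by (auto simp: Bfaces_iff Gfaces_iff)

lemma Gfaces_down_closed: "i < n \<Longrightarrow> X \<in> Gfaces n i \<Longrightarrow> Y \<subseteq> X \<Longrightarrow> Y \<noteq> {} \<Longrightarrow> Y \<in> Gfaces n i"
  by (auto simp: Gfaces_iff)

lemma Bfaces_down_closed: "i < n \<Longrightarrow> X \<in> Bfaces n i \<Longrightarrow> Y \<subseteq> X \<Longrightarrow> Y \<noteq> {} \<Longrightarrow> Y \<in> Bfaces n i"
  by (auto simp: Bfaces_iff)

definition Gamma_fvec :: "nat \<Rightarrow> nat \<Rightarrow> nat \<Rightarrow> int" where
  "Gamma_fvec n i m = int (Suc n choose m) - choose_shift (n - i) (Suc i) m"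

definition boundary_fvec :: "nat \<Rightarrow> nat \<Rightarrow> nat \<Rightarrow> int" where
  "boundary_fvec n i m = Gamma_fvec n i m - choose_shift (Suc i) (n - i) m"

text \<open>The rank-\<open>n\<close> cells of \<open>\<Lambda>\<^sup>n\<^sub>i\<close> are the \<open>Gamma_fvec n i n\<close> facets of \<open>\<Gamma>\<^sup>n\<^sub>i\<close>, each with
  \<open>n choose m\<close> faces of rank \<open>m\<close>, and \<open>\<tau>\<close>, whose faces are the boundary faces.\<close>
definition Lambda_incidences :: "nat \<Rightarrow> nat \<Rightarrow> nat \<Rightarrow> int" where
  "Lambda_incidences n i m = int (n choose m) * Gamma_fvec n i n + boundary_fvec n i m"

lemma Gamma_fvec_0: "i < n \<Longrightarrow> Gamma_fvec n i 0 = 1"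
  by (simp add: Gamma_fvec_def choose_shift_def)

lemma boundary_fvec_0: "i < n \<Longrightarrow> boundary_fvec n i 0 = 1"
  by (simp add: boundary_fvec_def Gamma_fvec_0 choose_shift_def)

lemma Gamma_fvec_top: "i < n \<Longrightarrow> Gamma_fvec n i n = int (Suc i)"
proof -
  assume i: "i < n"
  have "n - i = Suc (n - Suc i)" using i by simp
  then have "choose_shift (n - i) (Suc i) n = int (n - i)" using i by (simp add: choose_shift_def choose_Suc_self)
  then show ?thesis unfolding Gamma_fvec_def using i by (simp add: of_nat_diff)
qed

lemma card_Gfaces:
  assumes "i < n" "1 \<le> m"
  shows "int (card {X\<in>Gfaces n i. card X = m}) = Gamma_fvec n i m"
proof -
  let ?A = "{X. X \<subseteq> {0..n} \<and> card X = m}"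
  let ?B = "{X. X \<subseteq> {0..n} \<and> card X = m \<and> {0..i} \<subseteq> X}"
  have "{X\<in>Gfaces n i. card X = m} = ?A - ?B"
    using assms by (auto simp: Gfaces_iff)
  moreover have "card (?A - ?B) = card ?A - card ?B" "card ?B \<le> card ?A"
    by (rule card_Diff_subset, auto intro: finite_subset[of _ "Pow {0..n}"])
      (rule card_mono, auto intro: finite_subset[of _ "Pow {0..n}"])
  moreover have "card ?A = Suc n choose m" by (simp add: n_subsets)
  moreover have "int (card ?B) = choose_shift (n - i) (Suc i) m"
    using card_supersets[of "{0..n}" "{0..i}" m] assms by (simp add: card_Diff_subset)
  ultimately show ?thesis unfolding Gamma_fvec_def by simp
qed

lemma card_Bfaces:
  assumes "i < n" "1 \<le> m" "m < n"
  shows "int (card {X\<in>Bfaces n i. card X = m}) = boundary_fvec n i m"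
proof -
  let ?A = "{X. X \<subseteq> {0..n} \<and> card X = m}"
  let ?B1 = "{X. X \<subseteq> {0..n} \<and> card X = m \<and> {0..i} \<subseteq> X}"
  let ?B2 = "{X. X \<subseteq> {0..n} \<and> card X = m \<and> {Suc i..n} \<subseteq> X}"
  have fin: "finite ?A" by (auto intro: finite_subset[of _ "Pow {0..n}"])
  have "{X\<in>Bfaces n i. card X = m} = ?A - (?B1 \<union> ?B2)"
    using assms by (auto simp: Bfaces_iff)
  moreover have "card (?A - (?B1 \<union> ?B2)) = card ?A - card (?B1 \<union> ?B2)"
    by (rule card_Diff_subset) (auto intro: finite_subset[OF _ fin])
  moreover have "card (?B1 \<union> ?B2) \<le> card ?A"
    by (rule card_mono[OF fin]) auto
  moreover have "card (?B1 \<union> ?B2) = card ?B1 + card ?B2"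
  proof (rule card_Un_disjoint)
    show "?B1 \<inter> ?B2 = {}"
    proof (rule equals0I)
      fix X assume X: "X \<in> ?B1 \<inter> ?B2"
      have "{0..n} = {0..i} \<union> {Suc i..n}" using assms by auto
      then have "card {0..n} \<le> card X"
        using X by (intro card_mono) (auto intro: finite_subset)
      then show False using X assms by simp
    qed
  qed (auto intro: finite_subset[OF _ fin])
  moreover have "card ?A = Suc n choose m" by (simp add: n_subsets)
  moreover have "int (card ?B1) = choose_shift (n - i) (Suc i) m"
    using card_supersets[of "{0..n}" "{0..i}" m] assms by (simp add: card_Diff_subset)
  moreover have "{0..n} - {Suc i..n} = {0..i}" using assms by auto
  then have "int (card ?B2) = choose_shift (Suc i) (n - i) m"
    using card_supersets[of "{0..n}" "{Suc i..n}" m] assms by (simp add: card_Diff_subset)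
  ultimately show ?thesis unfolding boundary_fvec_def Gamma_fvec_def by simp
qed

lemma card_rank_chains_Gfaces:
  assumes "i < n" "T \<subseteq> {1..n}"
  shows "int (card (rank_chains (Gfaces n i) (sorted_list_of_set T))) = int (multinom0 T) * Gamma_fvec n i (max0 T)"
proof (cases "T = {}")
  case False
  have "finite T" using assms(2) finite_subset by blast
  then have "max0 T \<in> T" using False by (simp add: max0_eq_Max)
  then have "int (card {X\<in>Gfaces n i. card X = max0 T}) = Gamma_fvec n i (max0 T)"
    using assms by (intro card_Gfaces) auto
  moreover have "card (rank_chains (Gfaces n i) (sorted_list_of_set T))
      = (if T = {} then 1 else card {X\<in>Gfaces n i. card X = max0 T} * multinom0 T)"
    by (rule card_rank_chains_sorted_list_of_set[of "{0..n}"])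
      (use assms \<open>finite T\<close> Gfaces_subset_Pow Gfaces_down_closed in auto)
  ultimately show ?thesis using False by simp
qed (use assms in \<open>simp add: Gamma_fvec_0\<close>)

lemma card_rank_chains_Bfaces:
  assumes "i < n" "T \<subseteq> {1..<n}"
  shows "int (card (rank_chains (Bfaces n i) (sorted_list_of_set T))) = int (multinom0 T) * boundary_fvec n i (max0 T)"
proof (cases "T = {}")
  case False
  have "finite T" using assms(2) finite_subset by blast
  then have "max0 T \<in> T" using False by (simp add: max0_eq_Max)
  then have "int (card {X\<in>Bfaces n i. card X = max0 T}) = boundary_fvec n i (max0 T)"
    using assms by (intro card_Bfaces) auto
  moreover have "card (rank_chains (Bfaces n i) (sorted_list_of_set T))
      = (if T = {} then 1 else card {X\<in>Bfaces n i. card X = max0 T} * multinom0 T)"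
    by (rule card_rank_chains_sorted_list_of_set[of "{0..n}"])
      (use assms \<open>finite T\<close> Bfaces_subset_Pow Bfaces_down_closed in auto)
  ultimately show ?thesis using False by simp
qed (use assms in \<open>simp add: boundary_fvec_0\<close>)

lemma cless_chain_cases:
  "sorted_wrt (cless n i) xs \<Longrightarrow> (\<exists>Ys. xs = map Some Ys) \<or> (\<exists>Ys. xs = map Some Ys @ [None])"
proof (induction xs)
  case (Cons x xs)
  show ?case
  proof (cases x)
    case None
    then have "xs = []" using Cons.prems by (cases xs) auto
    then show ?thesis using None by auto
  next
    case (Some X)
    obtain Ys where "xs = map Some Ys \<or> xs = map Some Ys @ [None]"
      using Cons by auto
    then have "x # xs = map Some (X # Ys) \<or> x # xs = map Some (X # Ys) @ [None]"
      using Some by auto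
    then show ?thesis by meson
  qed
qed simp

lemma flags_Lambda:
  assumes "i < n"
  shows "{xs. set xs \<subseteq> cells n i \<and> sorted_wrt (cless n i) xs \<and> map (crank n) xs = rs}
    = map Some ` rank_chains (Gfaces n i) rs
      \<union> (\<lambda>Ys. map Some Ys @ [None]) ` {Ys. set Ys \<subseteq> Bfaces n i \<and> sorted_wrt (\<subset>) Ys \<and> map card Ys @ [n] = rs}"
proof (intro equalityI subsetI)
  fix xs assume "xs \<in> {xs. set xs \<subseteq> cells n i \<and> sorted_wrt (cless n i) xs \<and> map (crank n) xs = rs}"
  then have xs: "set xs \<subseteq> cells n i" "sorted_wrt (cless n i) xs" "map (crank n) xs = rs" by auto
  from cless_chain_cases[OF xs(2)] consider Ys where "xs = map Some Ys" | Ys where "xs = map Some Ys @ [None]"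
    by blast
  then show "xs \<in> map Some ` rank_chains (Gfaces n i) rs
      \<union> (\<lambda>Ys. map Some Ys @ [None]) ` {Ys. set Ys \<subseteq> Bfaces n i \<and> sorted_wrt (\<subset>) Ys \<and> map card Ys @ [n] = rs}"
  proof cases
    case (1 Ys)
    then have "Ys \<in> rank_chains (Gfaces n i) rs"
      using xs by (auto simp: rank_chains_def cells_def sorted_wrt_map comp_def)
    then show ?thesis using 1 by blast
  next
    case (2 Ys)
    then have "set Ys \<subseteq> Bfaces n i \<and> sorted_wrt (\<subset>) Ys \<and> map card Ys @ [n] = rs"
      using xs by (auto simp: sorted_wrt_map sorted_wrt_append comp_def)
    then show ?thesis using 2 by blast
  qed
next
  fix xs assume "xs \<in> map Some ` rank_chains (Gfaces n i) rs
      \<union> (\<lambda>Ys. map Some Ys @ [None]) ` {Ys. set Ys \<subseteq> Bfaces n i \<and> sorted_wrt (\<subset>) Ys \<and> map card Ys @ [n] = rs}"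
  then consider Ys where "xs = map Some Ys" "Ys \<in> rank_chains (Gfaces n i) rs"
    | Ys where "xs = map Some Ys @ [None]" "set Ys \<subseteq> Bfaces n i" "sorted_wrt (\<subset>) Ys" "map card Ys @ [n] = rs"
    by blast
  then show "xs \<in> {xs. set xs \<subseteq> cells n i \<and> sorted_wrt (cless n i) xs \<and> map (crank n) xs = rs}"
  proof cases
    case (1 Ys)
    then show ?thesis by (auto simp: rank_chains_def cells_def sorted_wrt_map comp_def)
  next
    case (2 Ys)
    then show ?thesis
      using Bfaces_subset_Gfaces[OF assms] by (auto simp: cells_def sorted_wrt_map sorted_wrt_append comp_def)
  qed
qed

lemma flagf_eq_card_rank_chains:
  assumes "i < n" "T \<subseteq> {1..n}"
  shows "flagf n i T = card (rank_chains (Gfaces n i) (sorted_list_of_set T))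
    + (if n \<in> T then card (rank_chains (Bfaces n i) (sorted_list_of_set (T - {n}))) else 0)"
proof -
  let ?rs = "sorted_list_of_set T"
  let ?B = "{Ys. set Ys \<subseteq> Bfaces n i \<and> sorted_wrt (\<subset>) Ys \<and> map card Ys @ [n] = ?rs}"
  have T: "finite T" "\<forall>y\<in>T - {n}. y < n" using assms(2) finite_subset by fastforce+
  have B: "?B = (if n \<in> T then rank_chains (Bfaces n i) (sorted_list_of_set (T - {n})) else {})"
  proof (cases "n \<in> T")
    case True
    then have "?rs = sorted_list_of_set (T - {n}) @ [n]"
      using sorted_list_of_set_insert_greater[of "T - {n}" n] T by (simp add: insert_absorb)
    then show ?thesis using True by (auto simp: rank_chains_def)
  next
    case False
    have "n \<notin> set ?rs" using False T by simp
    then have "?B = {}" by (auto simp: in_set_conv_decomp) (metis append_Cons append_Nil2)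
    then show ?thesis using False by simp
  qed
  have neq: "map Some Xs \<noteq> map Some Ys @ [None]" for Xs Ys :: "nat set list"
  proof
    assume eq: "map Some Xs = map Some Ys @ [None]"
    have "None \<in> set (map Some Ys @ [None])" by simp
    then show False unfolding eq[symmetric] by auto
  qed
  have fin: "finite (rank_chains F rs)" if "F \<subseteq> Pow {0..n}" for F rs
    using finite_rank_chains[OF _ that] by simp
  have "flagf n i T = card (map Some ` rank_chains (Gfaces n i) ?rs \<union> (\<lambda>Ys. map Some Ys @ [None]) ` ?B)"
    unfolding flagf_def flags_Lambda[OF assms(1)] ..
  also have "\<dots> = card (rank_chains (Gfaces n i) ?rs) + card ?B"
    by (subst card_Un_disjoint)
      (auto simp: B fin Gfaces_subset_Pow Bfaces_subset_Pow assms card_image inj_on_def neq)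
  finally show ?thesis by (simp add: B)
qed

lemma flagf_Lambda:
  assumes "i < n" "T \<subseteq> {1..n}"
  shows "int (flagf n i T) = lower_boolean_flag n (Gamma_fvec n i) (Lambda_incidences n i) T"
proof (cases "n \<in> T")
  case True
  let ?T0 = "T - {n}"
  have T0: "?T0 \<subseteq> {1..<n}" "finite ?T0" "\<forall>y\<in>?T0. y < n"
    using assms(2) finite_subset by fastforce+
  have "insert n ?T0 = T" using True by auto
  then have "multinom0 T = multinom0 ?T0 * (n choose max0 ?T0)" "max0 T = n"
    using multinom0_insert_greater[OF T0(2,3)] max0_insert_greater[OF T0(2,3)] by auto
  then show ?thesis
    using True flagf_eq_card_rank_chains[OF assms] card_rank_chains_Gfaces[OF assms]
      card_rank_chains_Bfaces[OF assms(1) T0(1)]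
    by (simp add: lower_boolean_flag_def Lambda_incidences_def algebra_simps)
next
  case False
  then show ?thesis
    using flagf_eq_card_rank_chains[OF assms] card_rank_chains_Gfaces[OF assms]
    by (simp add: lower_boolean_flag_def)
qed

lemma dehn_sommerville_Lambda:
  assumes i: "i < n"
  shows "dehn_sommerville n (Gamma_fvec n i) (Lambda_incidences n i)"
  unfolding dehn_sommerville_def
proof (intro conjI allI impI)
  fix m assume m: "m < n"
  define s :: int where "s = (-1) ^ n"
  have partial: "(\<Sum>j<n. (-1) ^ j * int (j choose m) * choose_shift A B j)
      = - s * choose_shift B A m - s * int (n choose m) * choose_shift A B n
        + s * int (Suc n choose m) * choose_shift A B (Suc n)" if "A + B = Suc n" for A B
    using alternating_sum_choose_shift[of A B "Suc (Suc n)" m] that unfolding s_def by simp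
  define Q1 where "Q1 = (\<Sum>j<n. (-1) ^ j * int (j choose m) * int (Suc n choose j))"
  define Q2 where "Q2 = (\<Sum>j<n. (-1) ^ j * int (j choose m) * choose_shift (n - i) (Suc i) j)"
  define Q3 where "Q3 = (\<Sum>j<n. (-1) ^ j * int (j choose m) * choose_shift (Suc i) (n - i) j)"
  define Q0 where "Q0 = (\<Sum>j<n. (-1) ^ j * int (j choose m) * int (n choose j))"
  have "n - i = Suc (n - Suc i)" "n - (n - i) = i" "Suc n - (n - i) = Suc i" using i by auto
  then have "choose_shift (n - i) (Suc i) n = int n - int i" "choose_shift (n - i) (Suc i) (Suc n) = 1"
      "choose_shift (Suc i) (n - i) n = int (Suc i)" "choose_shift (Suc i) (n - i) (Suc n) = 1"
    using i by (simp_all add: choose_shift_def choose_Suc_self of_nat_diff)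
  then have "Q1 = - s * int (n choose m) * (int n + 1) + s * int (Suc n choose m)"
      "Q2 = - s * choose_shift (Suc i) (n - i) m - s * int (n choose m) * (int n - int i) + s * int (Suc n choose m)"
      "Q3 = - s * choose_shift (n - i) (Suc i) m - s * int (n choose m) * int (Suc i) + s * int (Suc n choose m)"
      "Q0 = - (s * int (n choose m))"
    using partial[of "Suc n" 0] partial[of "n - i" "Suc i"] partial[of "Suc i" "n - i"] i m
      alternating_sum_choose_lessThan[OF m]
    unfolding Q0_def Q1_def Q2_def Q3_def s_def by (simp_all add: choose_shift_def)
  moreover have "(\<Sum>j<n. (-1) ^ j * int (j choose m) * Gamma_fvec n i j) = Q1 - Q2"
    unfolding Q1_def Q2_def Gamma_fvec_def by (simp add: sum_subtractf algebra_simps)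
  moreover have "(\<Sum>j<n. (-1) ^ j * int (j choose m) * Lambda_incidences n i j) = int (Suc i) * Q0 + Q1 - Q2 - Q3"
    unfolding Q0_def Q1_def Q2_def Q3_def Lambda_incidences_def boundary_fvec_def Gamma_fvec_top[OF i]
    unfolding Gamma_fvec_def by (simp add: sum_subtractf sum.distrib sum_distrib_left algebra_simps)
  ultimately show
    "(\<Sum>j<n. (-1) ^ j * int (j choose m) * Gamma_fvec n i j) = (-1) ^ n * (Gamma_fvec n i m - Lambda_incidences n i m)"
    "(\<Sum>j<n. (-1) ^ j * int (j choose m) * Lambda_incidences n i j) = - ((-1) ^ n * Lambda_incidences n i m)"
    unfolding s_def[symmetric] Lambda_incidences_def boundary_fvec_def Gamma_fvec_top[OF i]
    unfolding Gamma_fvec_def by (simp_all add: algebra_simps)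
qed

theorem cdindex_Lambda:
  assumes "i < n"
  shows "cdindex n i = cd_of_flag n (Gamma_fvec n i) (Lambda_incidences n i)"
proof (rule cdindex_eqI)
  let ?\<Phi> = "cd_of_flag n (Gamma_fvec n i) (Lambda_incidences n i)"
  show "?\<Phi> w = 0" if "cdeg w \<noteq> n" for w
    using cdeg_cd_of_flag that by blast
  fix S :: "nat set" assume S: "S \<subseteq> {1..n}"
  have "int (flagf n i T) = (\<Sum>U\<in>Pow T. abcoef ?\<Phi> (uword n U))" if "T \<subseteq> S" for T
    using that S fvec_cd_of_flag[OF dehn_sommerville_Lambda[OF assms], of T] flagf_Lambda[OF assms, of T]
    by (simp add: fvec_def)
  then show "abcoef ?\<Phi> (uword n S) = flagh n i S"
    using moebius_inversion_Pow[of S "\<lambda>U. abcoef ?\<Phi> (uword n U)"] S finite_subset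
    unfolding flagh_def by (metis (no_types, lifting) PowD finite_atLeastAtMost sum.cong)
qed

lemma fvec_checkPhi:
  assumes "1 \<le> i" "i < n" "S \<subseteq> {1..n}"
  shows "fvec n (checkPhi n i) S = lower_boolean_flag n (choose_shift (n - i) i)
      (\<lambda>m. int (n choose m) + choose_shift (n - i) i m - choose_shift i (n - i) m) S"
proof -
  have idx: "n - (i - 1) = Suc (n - i)" "Suc (i - 1) = i" using assms by auto
  have dG: "Gamma_fvec n i m - Gamma_fvec n (i - 1) m = choose_shift (n - i) i m" for m
    using choose_shift_Suc_diff[of "n - i" i m] unfolding Gamma_fvec_def idx by simp
  have "Lambda_incidences n i m - Lambda_incidences n (i - 1) m
      = int (n choose m) + choose_shift (n - i) i m - choose_shift i (n - i) m" for m
    using dG[of m] choose_shift_Suc_diff[of i "n - i" m] Gamma_fvec_top[of i n] Gamma_fvec_top[of "i - 1" n] assms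
    unfolding Lambda_incidences_def boundary_fvec_def idx by (simp add: algebra_simps)
  moreover note dG
  moreover have "fvec n (cdindex n j) S = lower_boolean_flag n (Gamma_fvec n j) (Lambda_incidences n j) S"
    if "j < n" for j
    using cdindex_Lambda[OF that] fvec_cd_of_flag[OF dehn_sommerville_Lambda[OF that] assms(3)] by simp
  ultimately show ?thesis
    using assms by (simp add: checkPhi_def fvec_diff lower_boolean_flag_diff)
qed

section \<open>The alternating sum\<close>

lemma choose_mult_fvec_checkPhi:
  assumes "1 \<le> i" "i < n" "S \<subseteq> {1..n}"
  shows "int (n choose i) * fvec n (checkPhi n i) S = lower_boolean_flag n
      (\<lambda>m. int (n choose m) * int (m choose i))
      (\<lambda>m. int (n choose m) * (int (n choose i) + int (m choose i) - int (m choose (n - i)))) S"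
proof -
  have "int (n choose i) * fvec n (checkPhi n i) S = lower_boolean_flag n
      (\<lambda>m. int (n choose i) * choose_shift (n - i) i m)
      (\<lambda>m. int (n choose i) * (int (n choose m) + choose_shift (n - i) i m - choose_shift i (n - i) m)) S"
    by (simp add: fvec_checkPhi[OF assms] lower_boolean_flag_def)
  also have "\<dots> = lower_boolean_flag n
      (\<lambda>m. int (n choose m) * int (m choose i))
      (\<lambda>m. int (n choose m) * (int (n choose i) + int (m choose i) - int (m choose (n - i)))) S"
    using assms choose_mult_choose_shift[of i n] choose_mult_choose_shift_compl[of i n]
    by (intro lower_boolean_flag_cong) (auto simp: algebra_simps)
  finally show ?thesis .
qed

lemma sum_upper_half_fvec_checkPhi:
  fixes n :: nat
  defines "I \<equiv> {n div 2 + 1..n - 1}"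
  assumes "odd n" and S: "S \<subseteq> {1..n}"
  shows "(\<Sum>i\<in>I. (-1) ^ i * int (n choose i) * fvec n (checkPhi n i) S) = lower_boolean_flag n
      (\<lambda>m. int (n choose m) * (\<Sum>i\<in>I. (-1) ^ i * int (m choose i)))
      (\<lambda>m. int (n choose m) * ((\<Sum>i\<in>I. (-1) ^ i * int (n choose i)) + (if m = 0 then 0 else -1))) S"
    (is "_ = ?rhs")
proof -
  have "(\<Sum>i\<in>I. (-1) ^ i * int (n choose i) * fvec n (checkPhi n i) S)
      = (\<Sum>i\<in>I. (-1) ^ i * lower_boolean_flag n
          (\<lambda>m. int (n choose m) * int (m choose i))
          (\<lambda>m. int (n choose m) * (int (n choose i) + int (m choose i) - int (m choose (n - i)))) S)"
    using S unfolding I_def by (intro sum.cong) (auto simp: choose_mult_fvec_checkPhi mult.assoc)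
  also have "\<dots> = lower_boolean_flag n
      (\<lambda>m. \<Sum>i\<in>I. (-1) ^ i * (int (n choose m) * int (m choose i)))
      (\<lambda>m. \<Sum>i\<in>I. (-1) ^ i * (int (n choose m) * (int (n choose i) + int (m choose i) - int (m choose (n - i))))) S"
    by (rule sum_lower_boolean_flag)
  also have "\<dots> = ?rhs"
  proof (rule lower_boolean_flag_cong)
    fix m assume "m < n"
    have "(\<Sum>i\<in>I. (-1) ^ i * (int (n choose m) * (int (n choose i) + int (m choose i) - int (m choose (n - i)))))
        = int (n choose m) * ((\<Sum>i\<in>I. (-1) ^ i * int (n choose i))
          + (\<Sum>i\<in>I. (-1) ^ i * (int (m choose i) - int (m choose (n - i)))))"
      by (simp add: ring_distribs sum.distrib sum_subtractf sum_distrib_left mult_ac)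
    then show "(\<Sum>i\<in>I. (-1) ^ i * (int (n choose m) * (int (n choose i) + int (m choose i) - int (m choose (n - i)))))
        = int (n choose m) * ((\<Sum>i\<in>I. (-1) ^ i * int (n choose i)) + (if m = 0 then 0 else -1))"
      using sum_upper_half_alternating_choose[OF \<open>odd n\<close> \<open>m < n\<close>] unfolding I_def by simp
  qed (use \<open>odd n\<close> S in \<open>simp_all add: odd_pos sum_distrib_left mult.left_commute\<close>)
  finally show ?thesis .
qed

lemma lower_boolean_flag_upper_half:
  fixes n :: nat
  defines "I \<equiv> {n div 2 + 1..n - 1}"
  assumes "odd n" and S: "S \<subseteq> {1..n}" "S \<noteq> {}"
  shows "lower_boolean_flag n
      (\<lambda>m. int (n choose m) * (\<Sum>i\<in>I. (-1) ^ i * int (m choose i)))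
      (\<lambda>m. int (n choose m) * ((\<Sum>i\<in>I. (-1) ^ i * int (n choose i)) + (if m = 0 then 0 else -1))) S
    = int (n choose Max S) * int (multinom S) * (\<Sum>j = n div 2 + 1..Max S. (-1) ^ j * int (Max S choose j))
      + (if S = {n} then 1 else 0)"
proof -
  have fin: "finite S" using S(1) finite_subset by blast
  show ?thesis
  proof (cases "n \<in> S")
    case False
    then have "Max S < n" using S fin by (metis Max_in atLeastAtMost_iff le_neq_implies_less subsetD)
    then have "(\<Sum>i\<in>I. (-1) ^ i * int (Max S choose i)) = (\<Sum>j = n div 2 + 1..Max S. (-1) ^ j * int (Max S choose j))"
      unfolding I_def by (intro sum.mono_neutral_right) auto
    moreover have "S \<noteq> {n}" using False by auto
    ultimately show ?thesis
      using False S fin by (simp add: lower_boolean_flag_def max0_eq_Max multinom_eq_multinom0)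
  next
    case True
    define S0 where "S0 = S - {n}"
    have S0: "finite S0" "\<forall>y\<in>S0. y < n" "insert n S0 = S"
      using True S fin unfolding S0_def by auto
    have "Max S = n" using True S fin by (intro Max_eqI) auto
    have A: "(\<Sum>i\<in>I. (-1) ^ i * int (n choose i)) = (\<Sum>j = n div 2 + 1..n. (-1) ^ j * int (n choose j)) + 1"
      using \<open>odd n\<close> by (cases n) (auto simp: I_def)
    have mult: "multinom S = multinom0 S0 * (n choose max0 S0)"
      using multinom_eq_multinom0[OF fin S(2)] multinom0_insert_greater[OF S0(1,2)] S0(3) by simp
    show ?thesis
    proof (cases "S0 = {}")
      case True
      then have "S = {n}" using S0(3) by simp
      then show ?thesis using True mult A \<open>Max S = n\<close> by (simp add: lower_boolean_flag_def S0_def)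
    next
      case False
      then have "max0 S0 \<in> S0" using S0(1) by (simp add: max0_eq_Max)
      then have "max0 S0 \<noteq> 0" "S \<noteq> {n}" using S(1) unfolding S0_def by auto
      then show ?thesis
        using \<open>n \<in> S\<close> mult A \<open>Max S = n\<close> by (simp add: lower_boolean_flag_def S0_def algebra_simps)
    qed
  qed
qed

theorem lemma3p7:
  fixes n :: nat and S :: "nat set"
  assumes "odd n" and "S \<subseteq> {1..n}" and "S \<noteq> {}"
  shows "(\<Sum>i = n div 2 + 1..n - 1. (-1) ^ i * int (n choose i) * fvec n (checkPhi n i) S)
       = int (n choose Max S) * int (multinom S) *
           (\<Sum>j = n div 2 + 1..Max S. (-1) ^ j * int (Max S choose j))
         + (if S = {n} then 1 else 0)"
  using sum_upper_half_fvec_checkPhi[OF assms(1,2)] lower_boolean_flag_upper_half[OF assms] by simp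

end
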